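(* There is an absolute constant $c>0$ such that for every finite set $\Omega$ with $|\Omega|\ge2$ and every $0<\varepsilon<1/2$ there exist $n_0>0$ and a random variable $\Theta$ (whose distribution depends only on $\varepsilon,\Omega$) taking integer values with $0<\Theta<((2\ln|\Omega|)/\varepsilon)^c$ such that for all $n>n_0$ and all $\mu\in\mathcal P(\Omega^n)$ the following hold, where $I\subset[n]$ is a uniformly random subset of size $\Theta$ and, given $I$, $\sigma\in\Omega^I$ is drawn from $\mu_I$: (i) $\mathbb E[D_\square(\mu^{I,\sigma},\bar\mu^{I,\sigma})]<\varepsilon$; (ii) letting $\bar\mu^{I}=\mathbb E[\bar\mu^{I,\sigma}\mid I]=\sum_{\sigma\in\Omega^I}\mu_I(\sigma)\bar\mu^{I,\sigma}\in\mathcal P(\Omega^n)$, we have $\mathbb E[D_\square(\mu,\bar\mu^{I})]<\varepsilon$.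
   Context: $\mathcal P(\mathcal X)$ denotes the set of probability measures on a finite set $\mathcal X$; $[n]=\{1,\dots,n\}$. For $\mu\in\mathcal P(\Omega^n)$ and $I\subset[n]$, $\mu_I$ is the joint marginal distribution of the coordinates in $I$, and $\mu_i=\mu_{\{i\}}$. For $\sigma\in\Omega^I$ let $S^{I,\sigma}=\{\tau\in\Omega^n:\tau_i=\sigma_i\ \forall i\in I\}$ and let $\mu^{I,\sigma}=\mu[\cdot\,|S^{I,\sigma}]$ be the conditional distribution if $\mu(S^{I,\sigma})>0$, and the uniform distribution on $S^{I,\sigma}$ otherwise. Let $\bar\mu^{I,\sigma}=\bigotimes_{i=1}^n\mu^{I,\sigma}_i$ be the product measure with the same one-coordinate marginals as $\mu^{I,\sigma}$. For $\mu,\nu\in\mathcal P(\Omega^n)$ let $\Gamma(\mu,\nu)$ be the set of couplings, i.e. probability measures $\gamma$ on $\Omega^n\times\Omega^n$ whose first and second marginals are $\mu$ and $\nu$. The cut metric is $D_\square(\mu,\nu)=\frac1n\min_{\gamma\in\Gamma(\mu,\nu)}\max_{I\subset[n],\,B\subset\Omega^n\times\Omega^n,\,\omega\in\Omega}\Big|\sum_{i\in I}\sum_{(\sigma,\tau)\in B}\gamma(\sigma,\tau)\big(\mathbf 1\{\sigma_i=\omega\}-\mathbf 1\{\tau_i=\omega\}\big)\Big|$. *)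

theory Defs
  imports "HOL-Probability.Probability"
begin

text \<open>Configurations: Omega^n is rendered as PiE {..<n} (\<lambda>_. Omega), i.e. functions
  nat \<Rightarrow> nat, with coordinates [n] = {0,..,n-1} and value undefined outside [n].
  A measure mu in P(Omega^n) is a pmf whose support lies in this set.\<close>

definition configs :: "nat \<Rightarrow> nat set \<Rightarrow> (nat \<Rightarrow> nat) set" where
  "configs n \<Omega> = PiE {..<n} (\<lambda>_. \<Omega>)"

definition couplings :: "'b pmf \<Rightarrow> 'b pmf \<Rightarrow> ('b \<times> 'b) pmf set" where
  "couplings \<mu> \<nu> = {\<gamma>. map_pmf fst \<gamma> = \<mu> \<and> map_pmf snd \<gamma> = \<nu>}"

definition cut_value :: "nat \<Rightarrow> nat set \<Rightarrow> ((nat \<Rightarrow> nat) \<times> (nat \<Rightarrow> nat)) pmf \<Rightarrow> real" where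
  "cut_value n \<Omega> \<gamma> = Max {\<bar>\<Sum>i\<in>I. \<Sum>p\<in>B. pmf \<gamma> p *
        ((if fst p i = \<omega> then 1 else 0) - (if snd p i = \<omega> then 1 else 0))\<bar> | I B \<omega>.
        I \<subseteq> {..<n} \<and> B \<subseteq> configs n \<Omega> \<times> configs n \<Omega> \<and> \<omega> \<in> \<Omega>}"

text \<open>Cut metric D_box (the minimum over couplings is written as an infimum).\<close>
definition cut_dist :: "nat \<Rightarrow> nat set \<Rightarrow> (nat \<Rightarrow> nat) pmf \<Rightarrow> (nat \<Rightarrow> nat) pmf \<Rightarrow> real" where
  "cut_dist n \<Omega> \<mu> \<nu> = (1 / real n) * (INF \<gamma> \<in> couplings \<mu> \<nu>. cut_value n \<Omega> \<gamma>)"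

definition pinned :: "nat \<Rightarrow> nat set \<Rightarrow> nat set \<Rightarrow> (nat \<Rightarrow> nat) \<Rightarrow> (nat \<Rightarrow> nat) set" where
  "pinned n \<Omega> I \<sigma> = {\<tau> \<in> configs n \<Omega>. \<forall>i\<in>I. \<tau> i = \<sigma> i}"

definition cond_dist :: "nat \<Rightarrow> nat set \<Rightarrow> (nat \<Rightarrow> nat) pmf \<Rightarrow> nat set \<Rightarrow> (nat \<Rightarrow> nat) \<Rightarrow> (nat \<Rightarrow> nat) pmf" where
  "cond_dist n \<Omega> \<mu> I \<sigma> =
     (if measure_pmf.prob \<mu> (pinned n \<Omega> I \<sigma>) > 0 then cond_pmf \<mu> (pinned n \<Omega> I \<sigma>)
      else pmf_of_set (pinned n \<Omega> I \<sigma>))"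

definition prod_marg :: "nat \<Rightarrow> (nat \<Rightarrow> nat) pmf \<Rightarrow> (nat \<Rightarrow> nat) pmf" where
  "prod_marg n \<mu> = Pi_pmf {..<n} undefined (\<lambda>i. map_pmf (\<lambda>\<tau>. \<tau> i) \<mu>)"

definition marg :: "(nat \<Rightarrow> nat) pmf \<Rightarrow> nat set \<Rightarrow> (nat \<Rightarrow> nat) pmf" where
  "marg \<mu> I = map_pmf (\<lambda>\<tau>. restrict \<tau> I) \<mu>"

definition bar_mix :: "nat \<Rightarrow> nat set \<Rightarrow> (nat \<Rightarrow> nat) pmf \<Rightarrow> nat set \<Rightarrow> (nat \<Rightarrow> nat) pmf" where
  "bar_mix n \<Omega> \<mu> I = bind_pmf (marg \<mu> I) (\<lambda>\<sigma>. prod_marg n (cond_dist n \<Omega> \<mu> I \<sigma>))"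

definition rand_subset :: "nat \<Rightarrow> nat pmf \<Rightarrow> nat set pmf" where
  "rand_subset n \<Theta> = bind_pmf \<Theta> (\<lambda>\<theta>. pmf_of_set {I. I \<subseteq> {..<n} \<and> card I = \<theta>})"

definition rand_pin :: "nat \<Rightarrow> nat pmf \<Rightarrow> (nat \<Rightarrow> nat) pmf \<Rightarrow> (nat set \<times> (nat \<Rightarrow> nat)) pmf" where
  "rand_pin n \<Theta> \<mu> = bind_pmf (rand_subset n \<Theta>) (\<lambda>I. map_pmf (\<lambda>\<sigma>. (I, \<sigma>)) (marg \<mu> I))"

end

theory Submission
  imports Defs
begin

text \<open>Couple a measure \<open>\<nu>\<close> on \<open>\<Omega>\<^sup>n\<close> independently with the product of its marginals. Every cut sum is
  bounded by the root mean square of the discrepancy \<open>#{i \<in> I. x\<^sub>i = \<omega>} - #{i \<in> I. y\<^sub>i = \<omega>}\<close>, whose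
  second moment is at most \<open>n + n\<cdot>sqrt Q(\<nu>)\<close> with \<open>Q(\<nu>) = \<Sum>\<^sub>i\<^sub>,\<^sub>j\<^sub>,\<^sub>\<omega> Cov(x\<^sub>i = \<omega>, x\<^sub>j = \<omega>)\<^sup>2\<close>;
  hence \<open>D\<^sub>\<box>(\<nu>, \<bar>\<nu>) \<le> sqrt ((1 + sqrt Q(\<nu>)) / n)\<close>.

  To make \<open>Q\<close> small after pinning, consider the potential
  \<open>\<Phi>(S) = E\<^sub>\<tau> \<Sum>\<^sub>i\<^sub>,\<^sub>\<omega> \<mu>(x\<^sub>i = \<omega> | x\<^sub>S = \<tau>\<^sub>S)\<^sup>2 \<in> [0, n]\<close>. Pinning a further coordinate \<open>j\<close> refines
  the conditioning, and by the law of total variance and Cauchy-Schwarz it raises \<open>\<Phi>\<close> by at least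
  \<open>E\<^sub>\<tau> \<Sum>\<^sub>i\<^sub>,\<^sub>\<omega> Cov(x\<^sub>i = \<omega>, x\<^sub>j = \<omega> | x\<^sub>S = \<tau>\<^sub>S)\<^sup>2\<close>. Averaging over \<open>j \<notin> S\<close> and \<open>|S| = t\<close>, the expected
  \<open>Q\<close> after pinning \<open>t\<close> uniform coordinates is at most \<open>n\<close> times the increment of the average of
  \<open>\<Phi>\<close> from level \<open>t\<close> to \<open>t + 1\<close>; telescoping over a uniform \<open>\<theta> \<in> {1..T}\<close> gives \<open>E Q \<le> n\<^sup>2 / T\<close>, and
  Jensen yields both expected cut distances \<open>\<le> sqrt (1/n + 1/sqrt T)\<close>.\<close>

lemma expectation_square_le:
  fixes f :: "'a \<Rightarrow> real"
  assumes fin: "finite (set_pmf p)"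
  shows "(measure_pmf.expectation p f)\<^sup>2 \<le> measure_pmf.expectation p (\<lambda>x. (f x)\<^sup>2)"
proof -
  define c where "c = measure_pmf.expectation p f"
  have int: "\<And>g::'a\<Rightarrow>real. integrable (measure_pmf p) g" using fin by (rule integrable_measure_pmf_finite)
  have "0 \<le> measure_pmf.expectation p (\<lambda>x. (f x - c)\<^sup>2)" by (rule integral_nonneg_AE) auto
  also have "(\<lambda>x. (f x - c)\<^sup>2) = (\<lambda>x. (f x)\<^sup>2 - 2 * c * f x + c\<^sup>2)" by (auto simp: power2_eq_square algebra_simps)
  also have "measure_pmf.expectation p \<dots> = measure_pmf.expectation p (\<lambda>x. (f x)\<^sup>2) - 2 * c * c + c\<^sup>2"
    using int by (simp add: c_def)
  finally show ?thesis unfolding c_def by (simp add: power2_eq_square)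
qed

lemma expectation_sqrt_le:
  fixes f :: "'a \<Rightarrow> real"
  assumes fin: "finite (set_pmf p)" and nn: "\<And>x. x \<in> set_pmf p \<Longrightarrow> 0 \<le> f x"
  shows "measure_pmf.expectation p (\<lambda>x. sqrt (f x)) \<le> sqrt (measure_pmf.expectation p f)"
proof -
  have "(measure_pmf.expectation p (\<lambda>x. sqrt (f x)))\<^sup>2 \<le> measure_pmf.expectation p (\<lambda>x. (sqrt (f x))\<^sup>2)"
    by (rule expectation_square_le[OF fin])
  also have "measure_pmf.expectation p (\<lambda>x. (sqrt (f x))\<^sup>2) = measure_pmf.expectation p f"
    by (intro integral_cong_AE) (auto simp: AE_measure_pmf_iff nn)
  finally show ?thesis by (simp add: real_le_rsqrt)
qed

lemma finite_configs: "finite \<Omega> \<Longrightarrow> finite (configs n \<Omega>)"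
  unfolding configs_def by (intro finite_PiE) auto

lemma finite_set_pmf_configs:
  assumes "finite \<Omega>" "set_pmf \<nu> \<subseteq> configs n \<Omega>"
  shows "finite (set_pmf \<nu>)"
  using assms finite_configs finite_subset by blast

definition occupancy :: "nat set \<Rightarrow> nat \<Rightarrow> (nat \<Rightarrow> nat) \<Rightarrow> real" where
  "occupancy I \<omega> x = (\<Sum>i\<in>I. if x i = \<omega> then 1 else 0)"

definition discrepancy :: "nat set \<Rightarrow> nat \<Rightarrow> (nat \<Rightarrow> nat) \<times> (nat \<Rightarrow> nat) \<Rightarrow> real" where
  "discrepancy I \<omega> p = occupancy I \<omega> (fst p) - occupancy I \<omega> (snd p)"

lemma cut_value_eq_Max:
  "cut_value n \<Omega> \<gamma> = Max ((\<lambda>(I, B, \<omega>). \<bar>\<Sum>p\<in>B. pmf \<gamma> p * discrepancy I \<omega> p\<bar>) `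
     (Pow {..<n} \<times> Pow (configs n \<Omega> \<times> configs n \<Omega>) \<times> \<Omega>))"
proof -
  have swap: "(\<Sum>i\<in>I. \<Sum>p\<in>B. pmf \<gamma> p * ((if fst p i = \<omega> then 1 else 0) - (if snd p i = \<omega> then 1 else 0)))
      = (\<Sum>p\<in>B. pmf \<gamma> p * discrepancy I \<omega> p)" for I B \<omega>
    unfolding discrepancy_def occupancy_def sum_subtractf[symmetric] sum_distrib_left
    by (rule sum.swap)
  show ?thesis unfolding cut_value_def swap by (intro arg_cong[where f=Max]) (auto simp: image_iff; blast)
qed

lemma cut_value_nonneg:
  assumes "finite \<Omega>" "\<Omega> \<noteq> {}"
  shows "0 \<le> cut_value n \<Omega> \<gamma>"
proof -
  obtain \<omega> where "\<omega> \<in> \<Omega>" using assms(2) by blast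
  then have "(\<lambda>(I, B, \<omega>). \<bar>\<Sum>p\<in>B. pmf \<gamma> p * discrepancy I \<omega> p\<bar>) ({}, {}, \<omega>) \<in>
     (\<lambda>(I, B, \<omega>). \<bar>\<Sum>p\<in>B. pmf \<gamma> p * discrepancy I \<omega> p\<bar>) `
       (Pow {..<n} \<times> Pow (configs n \<Omega> \<times> configs n \<Omega>) \<times> \<Omega>)"
    by (intro imageI) auto
  then show ?thesis unfolding cut_value_eq_Max
    by (intro Max_ge_iff[THEN iffD2]) (auto simp: assms finite_configs)
qed

text \<open>Each cut sum is at most \<open>E |Z|\<close> for the discrepancy \<open>Z\<close>, hence at most \<open>sqrt (E Z\<^sup>2)\<close>.\<close>
lemma cut_value_le_sqrt:
  assumes fin: "finite \<Omega>" and ne: "\<Omega> \<noteq> {}"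
    and supp: "set_pmf \<gamma> \<subseteq> configs n \<Omega> \<times> configs n \<Omega>"
    and bnd: "\<And>I \<omega>. I \<subseteq> {..<n} \<Longrightarrow> \<omega> \<in> \<Omega> \<Longrightarrow> measure_pmf.expectation \<gamma> (\<lambda>p. (discrepancy I \<omega> p)\<^sup>2) \<le> b"
  shows "cut_value n \<Omega> \<gamma> \<le> sqrt b"
  unfolding cut_value_eq_Max
proof (subst Max_le_iff, goal_cases)
  case 3
  define C where "C = configs n \<Omega>"
  have finC: "finite C" using fin by (simp add: C_def finite_configs)
  have "\<bar>\<Sum>p\<in>B. pmf \<gamma> p * discrepancy I \<omega> p\<bar> \<le> sqrt b"
    if I: "I \<subseteq> {..<n}" and B: "B \<subseteq> C \<times> C" and \<omega>: "\<omega> \<in> \<Omega>" for I B \<omega>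
  proof -
    have "\<bar>\<Sum>p\<in>B. pmf \<gamma> p * discrepancy I \<omega> p\<bar> \<le> (\<Sum>p\<in>B. \<bar>pmf \<gamma> p * discrepancy I \<omega> p\<bar>)"
      by (rule sum_abs)
    also have "\<dots> \<le> (\<Sum>p\<in>C\<times>C. \<bar>pmf \<gamma> p * discrepancy I \<omega> p\<bar>)"
      by (rule sum_mono2) (use finC B in auto)
    also have "\<dots> = measure_pmf.expectation \<gamma> (\<lambda>p. sqrt ((discrepancy I \<omega> p)\<^sup>2))"
      by (subst integral_measure_pmf_real[where A="C\<times>C"])
        (use finC supp in \<open>auto simp: C_def abs_mult mult.commute\<close>)
    also have "\<dots> \<le> sqrt (measure_pmf.expectation \<gamma> (\<lambda>p. (discrepancy I \<omega> p)\<^sup>2))"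
      by (rule expectation_sqrt_le) (use finC supp in \<open>auto simp: C_def intro: finite_subset\<close>)
    also have "\<dots> \<le> sqrt b" using bnd[OF I \<omega>] by simp
    finally show ?thesis .
  qed
  then show ?case unfolding C_def by auto
qed (use fin ne in \<open>auto simp: finite_configs\<close>)

lemma cut_dist_le_sqrt:
  assumes fin: "finite \<Omega>" and ne: "\<Omega> \<noteq> {}" and cpl: "\<gamma> \<in> couplings \<mu> \<nu>"
    and supp: "set_pmf \<gamma> \<subseteq> configs n \<Omega> \<times> configs n \<Omega>"
    and bnd: "\<And>I \<omega>. I \<subseteq> {..<n} \<Longrightarrow> \<omega> \<in> \<Omega> \<Longrightarrow> measure_pmf.expectation \<gamma> (\<lambda>p. (discrepancy I \<omega> p)\<^sup>2) \<le> b"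
  shows "cut_dist n \<Omega> \<mu> \<nu> \<le> sqrt b / real n"
proof -
  have "(INF \<gamma> \<in> couplings \<mu> \<nu>. cut_value n \<Omega> \<gamma>) \<le> cut_value n \<Omega> \<gamma>"
    by (rule cINF_lower[OF _ cpl]) (auto intro!: bdd_belowI[where m=0] cut_value_nonneg fin ne)
  also have "\<dots> \<le> sqrt b" by (rule cut_value_le_sqrt[OF fin ne supp bnd])
  finally show ?thesis unfolding cut_dist_def by (simp add: divide_right_mono)
qed

definition site_prob :: "(nat \<Rightarrow> nat) pmf \<Rightarrow> nat \<Rightarrow> nat \<Rightarrow> real" where
  "site_prob \<nu> i \<omega> = measure_pmf.prob \<nu> {x. x i = \<omega>}"

definition pair_prob :: "(nat \<Rightarrow> nat) pmf \<Rightarrow> nat \<Rightarrow> nat \<Rightarrow> nat \<Rightarrow> real" where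
  "pair_prob \<nu> i j \<omega> = measure_pmf.prob \<nu> {x. x i = \<omega> \<and> x j = \<omega>}"

definition site_cov :: "(nat \<Rightarrow> nat) pmf \<Rightarrow> nat \<Rightarrow> nat \<Rightarrow> nat \<Rightarrow> real" where
  "site_cov \<nu> i j \<omega> = pair_prob \<nu> i j \<omega> - site_prob \<nu> i \<omega> * site_prob \<nu> j \<omega>"

definition sq_cov_sum :: "nat \<Rightarrow> nat set \<Rightarrow> (nat \<Rightarrow> nat) pmf \<Rightarrow> real" where
  "sq_cov_sum n \<Omega> \<nu> = (\<Sum>i<n. \<Sum>j<n. \<Sum>\<omega>\<in>\<Omega>. (site_cov \<nu> i j \<omega>)\<^sup>2)"

lemma expectation_indicator_eq_prob: "measure_pmf.expectation \<nu> (\<lambda>x. if P x then 1 else 0 :: real) = measure_pmf.prob \<nu> {x. P x}"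
proof -
  have "(\<lambda>x. if P x then 1 else 0 :: real) = indicator {x. P x}" by (auto simp: indicator_def)
  then show ?thesis by simp
qed

lemma expectation_pair_pmf_mult:
  fixes f g :: "'a \<Rightarrow> real"
  assumes "finite (set_pmf M)" "finite (set_pmf N)"
  shows "measure_pmf.expectation (pair_pmf M N) (\<lambda>p. f (fst p) * g (snd p)) =
         measure_pmf.expectation M f * measure_pmf.expectation N g"
proof -
  have "measure_pmf.expectation (pair_pmf M N) (\<lambda>p. f (fst p) * g (snd p)) =
        (\<Sum>p\<in>set_pmf M \<times> set_pmf N. f (fst p) * g (snd p) * pmf (pair_pmf M N) p)"
    by (rule integral_measure_pmf_real) (use assms in auto)
  also have "\<dots> = (\<Sum>x\<in>set_pmf M. \<Sum>y\<in>set_pmf N. (f x * pmf M x) * (g y * pmf N y))"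
    unfolding sum.cartesian_product by (rule sum.cong) (auto simp: pmf_pair algebra_simps)
  also have "\<dots> = (\<Sum>x\<in>set_pmf M. f x * pmf M x) * (\<Sum>y\<in>set_pmf N. g y * pmf N y)"
    by (simp add: sum_product)
  also have "\<dots> = measure_pmf.expectation M f * measure_pmf.expectation N g"
    by (subst (1 2) integral_measure_pmf_real) (use assms in auto)
  finally show ?thesis .
qed

lemma set_pmf_prod_marg:
  assumes fin: "finite \<Omega>" and supp: "set_pmf \<nu> \<subseteq> configs n \<Omega>"
  shows "set_pmf (prod_marg n \<nu>) \<subseteq> configs n \<Omega>"
proof
  fix y assume "y \<in> set_pmf (prod_marg n \<nu>)"
  then have y: "y \<in> PiE_dflt {..<n} undefined (set_pmf \<circ> (\<lambda>i. map_pmf (\<lambda>\<tau>. \<tau> i) \<nu>))"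
    unfolding prod_marg_def by (simp add: set_Pi_pmf)
  show "y \<in> configs n \<Omega>" unfolding configs_def
  proof (rule PiE_I)
    fix i assume i: "i \<in> {..<n}"
    with y obtain \<tau> where "\<tau> \<in> set_pmf \<nu>" "y i = \<tau> i" by (auto simp: PiE_dflt_def)
    then show "y i \<in> \<Omega>" using supp i unfolding configs_def by (auto dest!: subsetD PiE_mem)
  next
    fix i assume "i \<notin> {..<n}" then show "y i = undefined" using y by (auto simp: PiE_dflt_def)
  qed
qed

lemma site_prob_prod_marg:
  assumes "i < n"
  shows "site_prob (prod_marg n \<nu>) i \<omega> = site_prob \<nu> i \<omega>"
proof -
  have "site_prob (prod_marg n \<nu>) i \<omega> = measure_pmf.prob (map_pmf (\<lambda>f. f i) (prod_marg n \<nu>)) {\<omega>}"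
    unfolding site_prob_def by (simp add: vimage_def)
  also have "map_pmf (\<lambda>f. f i) (prod_marg n \<nu>) = map_pmf (\<lambda>\<tau>. \<tau> i) \<nu>"
    unfolding prod_marg_def using assms by (subst Pi_pmf_component) auto
  finally show ?thesis unfolding site_prob_def by (simp add: vimage_def)
qed

lemma pair_prob_prod_marg:
  assumes fin: "finite (set_pmf \<nu>)" and i: "i < n" and j: "j < n"
  shows "pair_prob (prod_marg n \<nu>) i j \<omega> =
    site_prob \<nu> i \<omega> * site_prob \<nu> j \<omega> + (if i = j then site_prob \<nu> i \<omega> - (site_prob \<nu> i \<omega>)\<^sup>2 else 0)"
proof (cases "i = j")
  case True
  then show ?thesis using site_prob_prod_marg[OF i, of \<nu> \<omega>]
    by (simp add: pair_prob_def site_prob_def power2_eq_square)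
next
  case False
  then have ij: "i < n" "j < n" "i \<noteq> j" using i j by auto
  define f where "f = (\<lambda>k (v::nat). if k = i \<or> k = j then (if v = \<omega> then 1 else 0) else (1::real))"
  have prodeq: "(\<Prod>k\<in>{..<n}. f k (y k)) = f i (y i) * f j (y j)" for y
  proof -
    have "(\<Prod>k\<in>{..<n}. f k (y k)) = (\<Prod>k\<in>{i,j}. f k (y k))"
      by (rule prod.mono_neutral_right) (use ij in \<open>auto simp: f_def\<close>)
    then show ?thesis using ij by simp
  qed
  have "pair_prob (prod_marg n \<nu>) i j \<omega> = measure_pmf.expectation (prod_marg n \<nu>) (\<lambda>y. \<Prod>k\<in>{..<n}. f k (y k))"
    unfolding pair_prob_def prodeq by (subst expectation_indicator_eq_prob[symmetric]) (auto simp: f_def intro!: Bochner_Integration.integral_cong)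
  also have "\<dots> = (\<Prod>k\<in>{..<n}. measure_pmf.expectation (map_pmf (\<lambda>\<tau>. \<tau> k) \<nu>) (f k))"
    unfolding prod_marg_def
    by (rule expectation_prod_Pi_pmf) (auto simp: f_def intro!: integrable_measure_pmf_finite fin)
  also have "\<dots> = (\<Prod>k\<in>{i,j}. measure_pmf.expectation (map_pmf (\<lambda>\<tau>. \<tau> k) \<nu>) (f k))"
    by (rule prod.mono_neutral_right) (use ij in \<open>auto simp: f_def\<close>)
  also have "\<dots> = site_prob \<nu> i \<omega> * site_prob \<nu> j \<omega>"
    using ij by (simp add: f_def site_prob_def expectation_indicator_eq_prob[symmetric])
  finally show ?thesis using False by simp
qed

lemma expectation_occupancy:
  assumes "finite (set_pmf M)"
  shows "measure_pmf.expectation M (occupancy I \<omega>) = (\<Sum>i\<in>I. site_prob M i \<omega>)"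
  unfolding occupancy_def site_prob_def
  by (subst Bochner_Integration.integral_sum) (auto simp: expectation_indicator_eq_prob intro!: integrable_measure_pmf_finite assms)

lemma expectation_occupancy_sq:
  assumes "finite (set_pmf M)"
  shows "measure_pmf.expectation M (\<lambda>x. (occupancy I \<omega> x)\<^sup>2) = (\<Sum>i\<in>I. \<Sum>j\<in>I. pair_prob M i j \<omega>)"
proof -
  have "(\<lambda>x. (occupancy I \<omega> x)\<^sup>2) = (\<lambda>x. \<Sum>i\<in>I. \<Sum>j\<in>I. if x i = \<omega> \<and> x j = \<omega> then 1 else 0)"
    unfolding occupancy_def power2_eq_square by (auto simp: sum_product intro!: sum.cong)
  then show ?thesis unfolding pair_prob_def
    by (simp add: Bochner_Integration.integral_sum integrable_measure_pmf_finite assms expectation_indicator_eq_prob)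
qed

lemma expectation_discrepancy_sq_prod_marg:
  assumes fin: "finite \<Omega>" and supp: "set_pmf \<nu> \<subseteq> configs n \<Omega>" and I: "I \<subseteq> {..<n}"
  shows "measure_pmf.expectation (pair_pmf \<nu> (prod_marg n \<nu>)) (\<lambda>p. (discrepancy I \<omega> p)\<^sup>2) =
    (\<Sum>i\<in>I. \<Sum>j\<in>I. site_cov \<nu> i j \<omega>) + (\<Sum>i\<in>I. site_prob \<nu> i \<omega> - (site_prob \<nu> i \<omega>)\<^sup>2)"
proof -
  define \<rho> where "\<rho> = prod_marg n \<nu>"
  have f1: "finite (set_pmf \<nu>)" by (rule finite_set_pmf_configs[OF fin supp])
  have f2: "finite (set_pmf \<rho>)" unfolding \<rho>_def by (rule finite_set_pmf_configs[OF fin set_pmf_prod_marg[OF fin supp]])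
  have f3: "finite (set_pmf (pair_pmf \<nu> \<rho>))" using f1 f2 by simp
  have int: "\<And>g::_\<Rightarrow>real. integrable (pair_pmf \<nu> \<rho>) g" by (rule integrable_measure_pmf_finite[OF f3])
  have "(\<lambda>p. (discrepancy I \<omega> p)\<^sup>2) = (\<lambda>p. (occupancy I \<omega> (fst p))\<^sup>2 - 2 * (occupancy I \<omega> (fst p) * occupancy I \<omega> (snd p)) + (occupancy I \<omega> (snd p))\<^sup>2)"
    unfolding discrepancy_def by (auto simp: power2_eq_square algebra_simps)
  then have "measure_pmf.expectation (pair_pmf \<nu> \<rho>) (\<lambda>p. (discrepancy I \<omega> p)\<^sup>2) =
     measure_pmf.expectation (pair_pmf \<nu> \<rho>) (\<lambda>p. (occupancy I \<omega> (fst p))\<^sup>2)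
     - 2 * measure_pmf.expectation (pair_pmf \<nu> \<rho>) (\<lambda>p. occupancy I \<omega> (fst p) * occupancy I \<omega> (snd p))
     + measure_pmf.expectation (pair_pmf \<nu> \<rho>) (\<lambda>p. (occupancy I \<omega> (snd p))\<^sup>2)"
    using int by simp
  also have "\<dots> = (\<Sum>i\<in>I. \<Sum>j\<in>I. pair_prob \<nu> i j \<omega>) - 2 * ((\<Sum>i\<in>I. site_prob \<nu> i \<omega>) * (\<Sum>i\<in>I. site_prob \<rho> i \<omega>))
      + (\<Sum>i\<in>I. \<Sum>j\<in>I. pair_prob \<rho> i j \<omega>)"
    using f1 f2 expectation_pair_pmf_fst[where f="\<lambda>x. (occupancy I \<omega> x)\<^sup>2" and p=\<nu> and q=\<rho>]
      expectation_pair_pmf_snd[where f="\<lambda>x. (occupancy I \<omega> x)\<^sup>2" and p=\<nu> and q=\<rho>]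
    by (simp add: expectation_pair_pmf_mult expectation_occupancy expectation_occupancy_sq)
  also have "(\<Sum>i\<in>I. site_prob \<rho> i \<omega>) = (\<Sum>i\<in>I. site_prob \<nu> i \<omega>)"
    unfolding \<rho>_def using I by (intro sum.cong) (auto simp: site_prob_prod_marg)
  also have "(\<Sum>i\<in>I. \<Sum>j\<in>I. pair_prob \<rho> i j \<omega>) = (\<Sum>i\<in>I. \<Sum>j\<in>I. site_prob \<nu> i \<omega> * site_prob \<nu> j \<omega> + (if i = j then site_prob \<nu> i \<omega> - (site_prob \<nu> i \<omega>)\<^sup>2 else 0))"
    unfolding \<rho>_def using I f1 by (intro sum.cong refl pair_prob_prod_marg) auto
  also have "\<dots> = (\<Sum>i\<in>I. \<Sum>j\<in>I. site_prob \<nu> i \<omega> * site_prob \<nu> j \<omega>) + (\<Sum>i\<in>I. site_prob \<nu> i \<omega> - (site_prob \<nu> i \<omega>)\<^sup>2)"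
    using I finite_subset[OF I] by (simp only: sum.distrib) (simp add: sum.delta sum.delta')
  finally show ?thesis unfolding \<rho>_def site_cov_def
    by (simp add: sum_subtractf sum_product algebra_simps)
qed

lemma expectation_discrepancy_sq_prod_marg_le:
  assumes fin: "finite \<Omega>" and supp: "set_pmf \<nu> \<subseteq> configs n \<Omega>" and I: "I \<subseteq> {..<n}" and \<omega>: "\<omega> \<in> \<Omega>"
  shows "measure_pmf.expectation (pair_pmf \<nu> (prod_marg n \<nu>)) (\<lambda>p. (discrepancy I \<omega> p)\<^sup>2) \<le>
    real n + real n * sqrt (sq_cov_sum n \<Omega> \<nu>)"
proof -
  have finI: "finite I" using I finite_subset by blast
  define K where "K = {..<n} \<times> {..<n}"
  have "(\<Sum>i\<in>I. site_prob \<nu> i \<omega> - (site_prob \<nu> i \<omega>)\<^sup>2) \<le> (\<Sum>i\<in>I. 1)"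
  proof (intro sum_mono)
    fix i
    have "site_prob \<nu> i \<omega> \<le> 1" by (simp add: site_prob_def)
    moreover have "0 \<le> site_prob \<nu> i \<omega> * site_prob \<nu> i \<omega>" by simp
    ultimately show "site_prob \<nu> i \<omega> - (site_prob \<nu> i \<omega>)\<^sup>2 \<le> 1" unfolding power2_eq_square by linarith
  qed
  also have "\<dots> = real (card I)" by simp
  also have "\<dots> \<le> real n" using card_mono[OF _ I] by simp
  finally have A: "(\<Sum>i\<in>I. site_prob \<nu> i \<omega> - (site_prob \<nu> i \<omega>)\<^sup>2) \<le> real n" .
  have "(\<Sum>i\<in>I. \<Sum>j\<in>I. site_cov \<nu> i j \<omega>) = (\<Sum>p\<in>I\<times>I. site_cov \<nu> (fst p) (snd p) \<omega>)"
    by (simp add: sum.cartesian_product case_prod_unfold)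
  also have "\<dots> \<le> (\<Sum>p\<in>I\<times>I. \<bar>site_cov \<nu> (fst p) (snd p) \<omega>\<bar>)" by (intro sum_mono) auto
  also have "\<dots> \<le> (\<Sum>p\<in>K. \<bar>site_cov \<nu> (fst p) (snd p) \<omega>\<bar>)"
    by (rule sum_mono2) (use I in \<open>auto simp: K_def\<close>)
  also have "\<dots> \<le> real n * sqrt (sq_cov_sum n \<Omega> \<nu>)"
  proof -
    have "(\<Sum>p\<in>K. \<bar>site_cov \<nu> (fst p) (snd p) \<omega>\<bar>)\<^sup>2 \<le> (\<Sum>p\<in>K. (\<bar>site_cov \<nu> (fst p) (snd p) \<omega>\<bar>)\<^sup>2) * card K"
      by (rule sum_squared_le_sum_of_squares)
    also have "(\<Sum>p\<in>K. (\<bar>site_cov \<nu> (fst p) (snd p) \<omega>\<bar>)\<^sup>2) = (\<Sum>i<n. \<Sum>j<n. (site_cov \<nu> i j \<omega>)\<^sup>2)"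
      by (simp add: K_def sum.cartesian_product case_prod_unfold)
    also have "\<dots> \<le> sq_cov_sum n \<Omega> \<nu>"
      unfolding sq_cov_sum_def by (intro sum_mono member_le_sum) (use \<omega> fin in auto)
    finally have "(\<Sum>p\<in>K. \<bar>site_cov \<nu> (fst p) (snd p) \<omega>\<bar>)\<^sup>2 \<le> sq_cov_sum n \<Omega> \<nu> * (real n)\<^sup>2"
      by (simp add: K_def power2_eq_square mult_right_mono)
    then have "(\<Sum>p\<in>K. \<bar>site_cov \<nu> (fst p) (snd p) \<omega>\<bar>) \<le> sqrt (sq_cov_sum n \<Omega> \<nu> * (real n)\<^sup>2)"
      by (simp add: real_le_rsqrt)
    also have "\<dots> = real n * sqrt (sq_cov_sum n \<Omega> \<nu>)" by (simp add: real_sqrt_mult)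
    finally show ?thesis .
  qed
  finally have B: "(\<Sum>i\<in>I. \<Sum>j\<in>I. site_cov \<nu> i j \<omega>) \<le> real n * sqrt (sq_cov_sum n \<Omega> \<nu>)" .
  show ?thesis unfolding expectation_discrepancy_sq_prod_marg[OF fin supp I] using A B by simp
qed

lemma sq_cov_sum_nonneg: "0 \<le> sq_cov_sum n \<Omega> \<nu>"
  unfolding sq_cov_sum_def by (intro sum_nonneg) auto

lemma sqrt_add_mult_div_self:
  fixes m x :: real
  assumes "0 < m"
  shows "sqrt (m + m * x) / m = sqrt (1 / m + x / m)"
proof -
  have "sqrt (m + m * x) / m = sqrt ((m + m * x) / m\<^sup>2)" using assms by (simp add: real_sqrt_divide)
  also have "(m + m * x) / m\<^sup>2 = 1 / m + x / m" using assms by (simp add: power2_eq_square field_simps)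
  finally show ?thesis .
qed

lemma cut_dist_prod_marg_le:
  assumes fin: "finite \<Omega>" and ne: "\<Omega> \<noteq> {}" and n: "n > 0" and supp: "set_pmf \<nu> \<subseteq> configs n \<Omega>"
  shows "cut_dist n \<Omega> \<nu> (prod_marg n \<nu>) \<le> sqrt (1 / real n + sqrt (sq_cov_sum n \<Omega> \<nu>) / real n)"
proof -
  have "cut_dist n \<Omega> \<nu> (prod_marg n \<nu>) \<le> sqrt (real n + real n * sqrt (sq_cov_sum n \<Omega> \<nu>)) / real n"
  proof (rule cut_dist_le_sqrt[OF fin ne])
    show "pair_pmf \<nu> (prod_marg n \<nu>) \<in> couplings \<nu> (prod_marg n \<nu>)"
      by (simp add: couplings_def map_fst_pair_pmf map_snd_pair_pmf)
    show "set_pmf (pair_pmf \<nu> (prod_marg n \<nu>)) \<subseteq> configs n \<Omega> \<times> configs n \<Omega>"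
      using supp set_pmf_prod_marg[OF fin supp] by auto
  qed (rule expectation_discrepancy_sq_prod_marg_le[OF fin supp])
  then show ?thesis using n by (simp add: sqrt_add_mult_div_self)
qed

lemma set_pmf_margE:
  assumes "\<sigma> \<in> set_pmf (marg \<mu> I)"
  obtains \<tau> where "\<tau> \<in> set_pmf \<mu>" "\<sigma> = restrict \<tau> I"
  using assms unfolding marg_def by auto

lemma restrict_in_pinned:
  assumes "\<tau> \<in> configs n \<Omega>"
  shows "\<tau> \<in> pinned n \<Omega> I (restrict \<tau> I)"
  using assms unfolding pinned_def by auto

lemma prob_pinned_pos:
  assumes supp: "set_pmf \<mu> \<subseteq> configs n \<Omega>" and \<sigma>: "\<sigma> \<in> set_pmf (marg \<mu> I)"
  shows "measure_pmf.prob \<mu> (pinned n \<Omega> I \<sigma>) > 0"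
proof -
  obtain \<tau> where \<tau>: "\<tau> \<in> set_pmf \<mu>" "\<sigma> = restrict \<tau> I" using \<sigma> by (rule set_pmf_margE)
  show ?thesis using \<tau> supp restrict_in_pinned by (intro measure_pmf_posI) blast+
qed

lemma cond_dist_eq_cond_pmf:
  assumes supp: "set_pmf \<mu> \<subseteq> configs n \<Omega>" and \<sigma>: "\<sigma> \<in> set_pmf (marg \<mu> I)"
  shows "cond_dist n \<Omega> \<mu> I \<sigma> = cond_pmf \<mu> (pinned n \<Omega> I \<sigma>)"
  using prob_pinned_pos[OF assms] unfolding cond_dist_def by simp

lemma set_pmf_cond_dist:
  assumes supp: "set_pmf \<mu> \<subseteq> configs n \<Omega>" and \<sigma>: "\<sigma> \<in> set_pmf (marg \<mu> I)"
  shows "set_pmf (cond_dist n \<Omega> \<mu> I \<sigma>) \<subseteq> configs n \<Omega>"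
proof -
  have ne: "set_pmf \<mu> \<inter> pinned n \<Omega> I \<sigma> \<noteq> {}"
    using prob_pinned_pos[OF assms] measure_measure_pmf_not_zero
    by (metis measure_Int_set_pmf Int_commute measure_empty less_irrefl)
  show ?thesis unfolding cond_dist_eq_cond_pmf[OF assms] using supp ne by (simp add: set_cond_pmf) blast
qed

lemma bind_marg_cond_dist:
  assumes supp: "set_pmf \<mu> \<subseteq> configs n \<Omega>"
  shows "bind_pmf (marg \<mu> I) (\<lambda>\<sigma>. cond_dist n \<Omega> \<mu> I \<sigma>) = \<mu>"
proof -
  have "bind_pmf (marg \<mu> I) (\<lambda>\<sigma>. cond_dist n \<Omega> \<mu> I \<sigma>) =
        bind_pmf (marg \<mu> I) (\<lambda>\<sigma>. cond_pmf \<mu> {y. y \<in> pinned n \<Omega> I \<sigma>})"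
    by (intro bind_pmf_cong refl) (simp add: cond_dist_eq_cond_pmf[OF supp])
  also have "\<dots> = \<mu>"
  proof (rule bind_cond_pmf_cancel)
    fix \<sigma> assume "\<sigma> \<in> set_pmf (marg \<mu> I)"
    then obtain \<tau> where \<tau>: "\<tau> \<in> set_pmf \<mu>" "\<sigma> = restrict \<tau> I" by (rule set_pmf_margE)
    then show "set_pmf \<mu> \<inter> {y. y \<in> pinned n \<Omega> I \<sigma>} \<noteq> {}"
      using supp restrict_in_pinned by blast
  next
    fix y assume y: "y \<in> set_pmf \<mu>"
    then have "restrict y I \<in> set_pmf (marg \<mu> I)" unfolding marg_def by auto
    then show "set_pmf (marg \<mu> I) \<inter> {\<sigma>. y \<in> pinned n \<Omega> I \<sigma>} \<noteq> {}"
      using y supp restrict_in_pinned by blast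
  next
    fix \<sigma> y assume \<sigma>: "\<sigma> \<in> set_pmf (marg \<mu> I)" and y: "y \<in> set_pmf \<mu>" and R: "y \<in> pinned n \<Omega> I \<sigma>"
    have yC: "y \<in> configs n \<Omega>" using y supp by blast
    have "measure_pmf.prob (marg \<mu> I) {\<sigma>. y \<in> pinned n \<Omega> I \<sigma>} =
          measure_pmf.prob \<mu> {\<tau>. y \<in> pinned n \<Omega> I (restrict \<tau> I)}"
      unfolding marg_def by (simp add: vimage_def)
    also have "{\<tau>. y \<in> pinned n \<Omega> I (restrict \<tau> I)} = {\<tau>. \<forall>i\<in>I. \<tau> i = y i}"
      using yC unfolding pinned_def by auto
    also have "measure_pmf.prob \<mu> {\<tau>. \<forall>i\<in>I. \<tau> i = y i} = measure_pmf.prob \<mu> (pinned n \<Omega> I \<sigma>)"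
    proof -
      have "{\<tau>. \<forall>i\<in>I. \<tau> i = y i} \<inter> set_pmf \<mu> = pinned n \<Omega> I \<sigma> \<inter> set_pmf \<mu>"
        using R supp unfolding pinned_def by auto
      then show ?thesis by (metis measure_Int_set_pmf)
    qed
    finally show "measure_pmf.prob \<mu> {y. y \<in> pinned n \<Omega> I \<sigma>} =
          measure_pmf.prob (marg \<mu> I) {\<sigma>. y \<in> pinned n \<Omega> I \<sigma>}" by simp
  qed
  finally show ?thesis .
qed

lemma finite_set_pmf_marg:
  assumes fin: "finite \<Omega>" and supp: "set_pmf \<mu> \<subseteq> configs n \<Omega>"
  shows "finite (set_pmf (marg \<mu> I))"
  unfolding marg_def using finite_set_pmf_configs[OF fin supp] by simp

lemma cond_dist_prod_marg_coupling:
  assumes supp: "set_pmf \<mu> \<subseteq> configs n \<Omega>"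
  shows "bind_pmf (marg \<mu> I) (\<lambda>\<sigma>. pair_pmf (cond_dist n \<Omega> \<mu> I \<sigma>) (prod_marg n (cond_dist n \<Omega> \<mu> I \<sigma>)))
    \<in> couplings \<mu> (bar_mix n \<Omega> \<mu> I)"
proof -
  have "map_pmf fst (bind_pmf (marg \<mu> I) (\<lambda>\<sigma>. pair_pmf (cond_dist n \<Omega> \<mu> I \<sigma>) (prod_marg n (cond_dist n \<Omega> \<mu> I \<sigma>))))
      = bind_pmf (marg \<mu> I) (\<lambda>\<sigma>. cond_dist n \<Omega> \<mu> I \<sigma>)"
    by (simp add: map_bind_pmf map_fst_pair_pmf)
  also have "\<dots> = \<mu>" by (rule bind_marg_cond_dist[OF supp])
  finally show ?thesis unfolding couplings_def bar_mix_def by (simp add: map_bind_pmf map_snd_pair_pmf)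
qed

lemma cut_dist_bar_mix_le:
  assumes fin: "finite \<Omega>" and ne: "\<Omega> \<noteq> {}" and n: "n > 0" and supp: "set_pmf \<mu> \<subseteq> configs n \<Omega>"
  shows "cut_dist n \<Omega> \<mu> (bar_mix n \<Omega> \<mu> I) \<le>
     sqrt (1 / real n + measure_pmf.expectation (marg \<mu> I) (\<lambda>\<sigma>. sqrt (sq_cov_sum n \<Omega> (cond_dist n \<Omega> \<mu> I \<sigma>))) / real n)"
proof -
  define cd where "cd = (\<lambda>\<sigma>. cond_dist n \<Omega> \<mu> I \<sigma>)"
  define M where "M = marg \<mu> I"
  define \<gamma> where "\<gamma> = bind_pmf M (\<lambda>\<sigma>. pair_pmf (cd \<sigma>) (prod_marg n (cd \<sigma>)))"
  have finM: "finite (set_pmf M)" unfolding M_def by (rule finite_set_pmf_marg[OF fin supp])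
  have cds: "\<And>\<sigma>. \<sigma> \<in> set_pmf M \<Longrightarrow> set_pmf (cd \<sigma>) \<subseteq> configs n \<Omega>"
    unfolding cd_def M_def by (rule set_pmf_cond_dist[OF supp])
  have E: "measure_pmf.expectation M (\<lambda>\<sigma>. sqrt (sq_cov_sum n \<Omega> (cd \<sigma>))) =
      (\<Sum>\<sigma>\<in>set_pmf M. pmf M \<sigma> * sqrt (sq_cov_sum n \<Omega> (cd \<sigma>)))"
    by (subst integral_measure_pmf_real[OF finM]) (auto simp: mult.commute)
  let ?b = "real n + real n * measure_pmf.expectation M (\<lambda>\<sigma>. sqrt (sq_cov_sum n \<Omega> (cd \<sigma>)))"
  have "cut_dist n \<Omega> \<mu> (bar_mix n \<Omega> \<mu> I) \<le> sqrt ?b / real n"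
  proof (rule cut_dist_le_sqrt[OF fin ne])
    show "\<gamma> \<in> couplings \<mu> (bar_mix n \<Omega> \<mu> I)"
      unfolding \<gamma>_def M_def cd_def by (rule cond_dist_prod_marg_coupling[OF supp])
    show "set_pmf \<gamma> \<subseteq> configs n \<Omega> \<times> configs n \<Omega>"
      unfolding \<gamma>_def using cds set_pmf_prod_marg[OF fin cds] by auto
  next
    fix J \<omega> assume J: "J \<subseteq> {..<n}" and \<omega>: "\<omega> \<in> \<Omega>"
    have "measure_pmf.expectation \<gamma> (\<lambda>p. (discrepancy J \<omega> p)\<^sup>2) =
        (\<Sum>\<sigma>\<in>set_pmf M. pmf M \<sigma> *\<^sub>R measure_pmf.expectation (pair_pmf (cd \<sigma>) (prod_marg n (cd \<sigma>))) (\<lambda>p. (discrepancy J \<omega> p)\<^sup>2))"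
      unfolding \<gamma>_def
    proof (rule pmf_expectation_bind[OF finM])
      fix \<sigma> assume "\<sigma> \<in> set_pmf M"
      then show "finite (set_pmf (pair_pmf (cd \<sigma>) (prod_marg n (cd \<sigma>))))"
        using finite_set_pmf_configs[OF fin cds] finite_set_pmf_configs[OF fin set_pmf_prod_marg[OF fin cds]] by simp
    qed simp
    also have "\<dots> \<le> (\<Sum>\<sigma>\<in>set_pmf M. pmf M \<sigma> * (real n + real n * sqrt (sq_cov_sum n \<Omega> (cd \<sigma>))))"
      by (intro sum_mono) (auto intro!: mult_left_mono expectation_discrepancy_sq_prod_marg_le[OF fin cds J \<omega>])
    also have "\<dots> = real n * (\<Sum>\<sigma>\<in>set_pmf M. pmf M \<sigma>) + real n * (\<Sum>\<sigma>\<in>set_pmf M. pmf M \<sigma> * sqrt (sq_cov_sum n \<Omega> (cd \<sigma>)))"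
      by (simp add: algebra_simps sum.distrib sum_distrib_left)
    also have "(\<Sum>\<sigma>\<in>set_pmf M. pmf M \<sigma>) = 1" using finM by (simp add: sum_pmf_eq_1)
    finally show "measure_pmf.expectation \<gamma> (\<lambda>p. (discrepancy J \<omega> p)\<^sup>2) \<le> ?b" unfolding E by simp
  qed
  then show ?thesis unfolding M_def cd_def using n by (simp add: sqrt_add_mult_div_self)
qed

lemma sum_weighted_block_average:
  fixes w Z :: "'x \<Rightarrow> real"
  assumes finD: "finite D" and nn: "\<And>x. x \<in> D \<Longrightarrow> 0 \<le> w x"
    and K1: "\<And>x. x \<in> D \<Longrightarrow> x \<in> Kf x" and K2: "\<And>x. x \<in> D \<Longrightarrow> Kf x \<subseteq> D"
    and K3: "\<And>x y. x \<in> D \<Longrightarrow> y \<in> Kf x \<Longrightarrow> Kf y = Kf x"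
  shows "(\<Sum>x\<in>D. w x * Z x) = (\<Sum>x\<in>D. w x * ((\<Sum>y\<in>Kf x. w y * Z y) / sum w (Kf x)))"
proof -
  have sym: "y \<in> Kf x \<longleftrightarrow> x \<in> Kf y" if "x \<in> D" "y \<in> D" for x y
    using K1 K3 that by metis
  have restrict: "(\<Sum>y\<in>Kf x. f y) = (\<Sum>y\<in>D. if y \<in> Kf x then f y else 0)" if "x \<in> D" for x and f :: "'x \<Rightarrow> real"
    using sum.inter_restrict[OF finD, of f "Kf x"] K2[OF that] by (simp add: Int_absorb1)
  have cancel: "w y * (sum w (Kf y) / sum w (Kf y)) = w y" if y: "y \<in> D" for y
  proof -
    have "w y \<le> sum w (Kf y)"
      by (rule member_le_sum[OF K1[OF y]]) (use K2[OF y] nn finD in \<open>auto intro: finite_subset\<close>)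
    then show ?thesis using nn[OF y] by (cases "sum w (Kf y) = 0") simp_all
  qed
  have "(\<Sum>x\<in>D. w x * ((\<Sum>y\<in>Kf x. w y * Z y) / sum w (Kf x))) =
        (\<Sum>x\<in>D. \<Sum>y\<in>D. if y \<in> Kf x then w x * (w y * Z y / sum w (Kf y)) else 0)"
  proof (rule sum.cong[OF refl])
    fix x assume x: "x \<in> D"
    have "w x * ((\<Sum>y\<in>Kf x. w y * Z y) / sum w (Kf x)) = (\<Sum>y\<in>Kf x. w x * (w y * Z y / sum w (Kf y)))"
      by (simp add: sum_distrib_left sum_divide_distrib K3[OF x] cong: sum.cong)
    also have "\<dots> = (\<Sum>y\<in>D. if y \<in> Kf x then w x * (w y * Z y / sum w (Kf y)) else 0)"
      by (rule restrict[OF x])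
    finally show "w x * ((\<Sum>y\<in>Kf x. w y * Z y) / sum w (Kf x)) = \<dots>" .
  qed
  also have "\<dots> = (\<Sum>y\<in>D. \<Sum>x\<in>D. if x \<in> Kf y then w x * (w y * Z y / sum w (Kf y)) else 0)"
    by (subst sum.swap) (intro sum.cong refl, simp add: sym)
  also have "\<dots> = (\<Sum>y\<in>D. (\<Sum>x\<in>Kf y. w x) * (w y * Z y / sum w (Kf y)))"
  proof (rule sum.cong[OF refl])
    fix y assume y: "y \<in> D"
    show "(\<Sum>x\<in>D. if x \<in> Kf y then w x * (w y * Z y / sum w (Kf y)) else 0) =
        (\<Sum>x\<in>Kf y. w x) * (w y * Z y / sum w (Kf y))"
      using restrict[OF y, of "\<lambda>x. w x * (w y * Z y / sum w (Kf y))"] by (simp only: sum_distrib_right)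
  qed
  also have "\<dots> = (\<Sum>y\<in>D. w y * Z y)"
    by (intro sum.cong refl) (metis (no_types, lifting) cancel times_divide_eq_right mult.assoc mult.commute)
  finally show ?thesis ..
qed

lemma sum_Int_eq_sum_mult_indicator:
  fixes w :: "'x \<Rightarrow> real"
  shows "finite K \<Longrightarrow> sum w (K \<inter> A) = (\<Sum>x\<in>K. w x * (if x \<in> A then 1 else 0))"
  by (auto simp: sum.inter_restrict intro!: sum.cong)

lemma sum_weighted_sq_le:
  fixes w g :: "'x \<Rightarrow> real"
  assumes nn: "\<And>x. x \<in> A \<Longrightarrow> 0 \<le> w x"
  shows "(\<Sum>x\<in>A. w x * g x)\<^sup>2 \<le> sum w A * (\<Sum>x\<in>A. w x * (g x)\<^sup>2)"
proof -
  have "(\<Sum>x\<in>A. w x * g x) = (\<Sum>x\<in>A. sqrt (w x) * (sqrt (w x) * g x))"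
    using nn by (intro sum.cong refl) (simp add: mult.assoc[symmetric])
  then have "(\<Sum>x\<in>A. w x * g x)\<^sup>2 \<le> (\<Sum>x\<in>A. (sqrt (w x))\<^sup>2) * (\<Sum>x\<in>A. (sqrt (w x) * g x)\<^sup>2)"
    by (simp only: Cauchy_Schwarz_ineq_sum)
  also have "\<dots> = sum w A * (\<Sum>x\<in>A. w x * (g x)\<^sup>2)"
    using nn by (simp add: power_mult_distrib cong: sum.cong)
  finally show ?thesis .
qed

lemma sum_Int_block_average:
  fixes w :: "'x \<Rightarrow> real"
  assumes finK: "finite K" and nn: "\<And>x. x \<in> K \<Longrightarrow> 0 \<le> w x"
    and K1: "\<And>x. x \<in> K \<Longrightarrow> x \<in> Kf x" and K2: "\<And>x. x \<in> K \<Longrightarrow> Kf x \<subseteq> K"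
    and K3: "\<And>x y. x \<in> K \<Longrightarrow> y \<in> Kf x \<Longrightarrow> Kf y = Kf x"
    and inv: "\<And>x y. x \<in> K \<Longrightarrow> y \<in> Kf x \<Longrightarrow> y \<in> G \<longleftrightarrow> x \<in> G"
  shows "(\<Sum>x\<in>K \<inter> G. w x * (sum w (Kf x \<inter> E) / sum w (Kf x))) = sum w (K \<inter> (E \<inter> G))"
proof -
  define ind :: "'x set \<Rightarrow> 'x \<Rightarrow> real" where "ind A x = (if x \<in> A then 1 else 0 :: real)" for A x
  have finKf: "finite (Kf x)" if "x \<in> K" for x using K2[OF that] finK finite_subset by blast
  have "sum w (K \<inter> (E \<inter> G)) = (\<Sum>x\<in>K. w x * ind (E \<inter> G) x)"
    unfolding ind_def by (rule sum_Int_eq_sum_mult_indicator[OF finK])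
  also have "\<dots> = (\<Sum>x\<in>K. w x * ((\<Sum>y\<in>Kf x. w y * ind (E \<inter> G) y) / sum w (Kf x)))"
    by (rule sum_weighted_block_average[OF finK nn K1 K2 K3])
  also have "\<dots> = (\<Sum>x\<in>K. w x * (sum w (Kf x \<inter> E) / sum w (Kf x)) * ind G x)"
  proof (rule sum.cong[OF refl])
    fix x assume x: "x \<in> K"
    have "(\<Sum>y\<in>Kf x. w y * ind (E \<inter> G) y) = ind G x * (\<Sum>y\<in>Kf x. w y * ind E y)"
      unfolding sum_distrib_left by (intro sum.cong refl) (use inv[OF x] in \<open>auto simp: ind_def\<close>)
    also have "(\<Sum>y\<in>Kf x. w y * ind E y) = sum w (Kf x \<inter> E)"
      unfolding ind_def by (rule sum_Int_eq_sum_mult_indicator[OF finKf[OF x], symmetric])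
    finally show "w x * ((\<Sum>y\<in>Kf x. w y * ind (E \<inter> G) y) / sum w (Kf x)) =
        w x * (sum w (Kf x \<inter> E) / sum w (Kf x)) * ind G x" by simp
  qed
  also have "\<dots> = (\<Sum>x\<in>K \<inter> G. w x * (sum w (Kf x \<inter> E) / sum w (Kf x)))"
    unfolding ind_def by (simp add: sum.inter_restrict[OF finK] if_distrib cong: if_cong)
  finally show ?thesis ..
qed

text \<open>The squared covariance of \<open>E\<close> and a block-measurable \<open>F\<close> is at most the variance of the
  block-conditional probability of \<open>E\<close>, by Cauchy-Schwarz.\<close>
lemma cond_cov_sq_le_refinement_gain:
  fixes w :: "'x \<Rightarrow> real"
  assumes finK: "finite K" and nn: "\<And>x. x \<in> K \<Longrightarrow> 0 \<le> w x" and pos: "sum w K > 0"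
    and K1: "\<And>x. x \<in> K \<Longrightarrow> x \<in> Kf x" and K2: "\<And>x. x \<in> K \<Longrightarrow> Kf x \<subseteq> K"
    and K3: "\<And>x y. x \<in> K \<Longrightarrow> y \<in> Kf x \<Longrightarrow> Kf y = Kf x"
    and Finv: "\<And>x y. x \<in> K \<Longrightarrow> y \<in> Kf x \<Longrightarrow> (y \<in> F \<longleftrightarrow> x \<in> F)"
  shows "(sum w (K \<inter> (E \<inter> F)) / sum w K - (sum w (K \<inter> E) / sum w K) * (sum w (K \<inter> F) / sum w K))\<^sup>2
     \<le> (\<Sum>x\<in>K. w x * (sum w (Kf x \<inter> E) / sum w (Kf x))\<^sup>2) / sum w K - (sum w (K \<inter> E) / sum w K)\<^sup>2"
proof -
  define m where "m = sum w K"
  define p where "p = sum w (K \<inter> E) / m"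
  define p' where "p' x = sum w (Kf x \<inter> E) / sum w (Kf x)" for x
  have mean: "(\<Sum>x\<in>K. w x * p' x) = m * p"
  proof -
    have "(\<Sum>x\<in>K \<inter> UNIV. w x * p' x) = sum w (K \<inter> (E \<inter> UNIV))"
      unfolding p'_def by (rule sum_Int_block_average[OF finK nn K1 K2 K3]) simp_all
    then show ?thesis using pos by (simp add: p_def m_def)
  qed
  have "(\<Sum>x\<in>K \<inter> F. w x * p' x) = sum w (K \<inter> (E \<inter> F))"
    unfolding p'_def by (rule sum_Int_block_average[OF finK nn K1 K2 K3 Finv])
  then have cov: "(\<Sum>x\<in>K \<inter> F. w x * (p' x - p)) = sum w (K \<inter> (E \<inter> F)) - p * sum w (K \<inter> F)"
    by (simp add: right_diff_distrib sum_subtractf sum_distrib_left mult.commute)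
  have var: "(\<Sum>x\<in>K. w x * (p' x - p)\<^sup>2) = (\<Sum>x\<in>K. w x * (p' x)\<^sup>2) - m * p\<^sup>2"
  proof -
    have "(\<Sum>x\<in>K. w x * (p' x - p)\<^sup>2) = (\<Sum>x\<in>K. w x * (p' x)\<^sup>2) - 2 * p * (\<Sum>x\<in>K. w x * p' x) + p\<^sup>2 * m"
      unfolding m_def by (simp add: power2_eq_square algebra_simps sum_subtractf sum.distrib sum_distrib_left)
    then show ?thesis using mean by (simp add: power2_eq_square algebra_simps)
  qed
  have "(\<Sum>x\<in>K \<inter> F. w x * (p' x - p))\<^sup>2 \<le> sum w (K \<inter> F) * (\<Sum>x\<in>K \<inter> F. w x * (p' x - p)\<^sup>2)"
    using nn by (intro sum_weighted_sq_le) auto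
  also have "\<dots> \<le> m * (\<Sum>x\<in>K. w x * (p' x - p)\<^sup>2)"
    unfolding m_def using finK nn
    by (intro mult_mono sum_mono2 sum_nonneg mult_nonneg_nonneg) auto
  finally have cs: "(sum w (K \<inter> (E \<inter> F)) - p * sum w (K \<inter> F))\<^sup>2 \<le> m * (\<Sum>x\<in>K. w x * (p' x - p)\<^sup>2)"
    unfolding cov .
  have "(sum w (K \<inter> (E \<inter> F)) / m - p * (sum w (K \<inter> F) / m))\<^sup>2 = (sum w (K \<inter> (E \<inter> F)) - p * sum w (K \<inter> F))\<^sup>2 / m\<^sup>2"
    using pos by (simp add: m_def power2_eq_square field_simps)
  also have "\<dots> \<le> m * (\<Sum>x\<in>K. w x * (p' x - p)\<^sup>2) / m\<^sup>2"
    using cs by (simp add: divide_right_mono)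
  also have "\<dots> = (\<Sum>x\<in>K. w x * (p' x)\<^sup>2) / m - p\<^sup>2"
    unfolding var using pos by (simp add: m_def power2_eq_square field_simps)
  finally show ?thesis unfolding m_def p_def p'_def .
qed

text \<open>\<open>\<mu>(A | x\<^sub>S = \<tau>\<^sub>S)\<close> as a finite sum over the block; it is \<open>0\<close> on null blocks, where
  \<open>cond_dist\<close> would instead be uniform.\<close>
definition pinned_prob :: "(nat \<Rightarrow> nat) pmf \<Rightarrow> nat \<Rightarrow> nat set \<Rightarrow> nat set \<Rightarrow> (nat \<Rightarrow> nat) \<Rightarrow> (nat \<Rightarrow> nat) set \<Rightarrow> real" where
  "pinned_prob \<mu> n \<Omega> S \<tau> A = sum (pmf \<mu>) (pinned n \<Omega> S \<tau> \<inter> A) / sum (pmf \<mu>) (pinned n \<Omega> S \<tau>)"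

definition pinning_potential :: "(nat \<Rightarrow> nat) pmf \<Rightarrow> nat \<Rightarrow> nat set \<Rightarrow> nat set \<Rightarrow> real" where
  "pinning_potential \<mu> n \<Omega> S = (\<Sum>\<tau>\<in>configs n \<Omega>. pmf \<mu> \<tau> * (\<Sum>i<n. \<Sum>\<omega>\<in>\<Omega>. (pinned_prob \<mu> n \<Omega> S \<tau> {x. x i = \<omega>})\<^sup>2))"

definition pinned_cov :: "(nat \<Rightarrow> nat) pmf \<Rightarrow> nat \<Rightarrow> nat set \<Rightarrow> nat set \<Rightarrow> (nat \<Rightarrow> nat) \<Rightarrow> nat \<Rightarrow> nat \<Rightarrow> nat \<Rightarrow> real" where
  "pinned_cov \<mu> n \<Omega> S \<tau> i j \<omega> = pinned_prob \<mu> n \<Omega> S \<tau> {x. x i = \<omega> \<and> x j = \<omega>}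
      - pinned_prob \<mu> n \<Omega> S \<tau> {x. x i = \<omega>} * pinned_prob \<mu> n \<Omega> S \<tau> {x. x j = \<omega>}"

definition pinned_cov_mass :: "(nat \<Rightarrow> nat) pmf \<Rightarrow> nat \<Rightarrow> nat set \<Rightarrow> nat set \<Rightarrow> real" where
  "pinned_cov_mass \<mu> n \<Omega> S = (\<Sum>\<tau>\<in>configs n \<Omega>. pmf \<mu> \<tau> * (\<Sum>i<n. \<Sum>j<n. \<Sum>\<omega>\<in>\<Omega>. (pinned_cov \<mu> n \<Omega> S \<tau> i j \<omega>)\<^sup>2))"

lemma pinned_basic:
  assumes "\<tau> \<in> configs n \<Omega>"
  shows "\<tau> \<in> pinned n \<Omega> S \<tau>" "pinned n \<Omega> S \<tau> \<subseteq> configs n \<Omega>"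
    "\<And>y. y \<in> pinned n \<Omega> S \<tau> \<Longrightarrow> pinned n \<Omega> S y = pinned n \<Omega> S \<tau>"
  using assms unfolding pinned_def by auto

lemma pinned_insert_subset: "y \<in> pinned n \<Omega> S \<tau> \<Longrightarrow> pinned n \<Omega> (insert j S) y \<subseteq> pinned n \<Omega> S \<tau>"
  unfolding pinned_def by auto

lemma finite_pinned: "finite \<Omega> \<Longrightarrow> finite (pinned n \<Omega> S \<tau>)"
  unfolding pinned_def using finite_configs by auto

text \<open>Pinning \<open>j\<close> refines the blocks \<open>pinned n \<Omega> S \<tau>\<close>, and the event \<open>x j = \<omega>\<close> is constant on the
  refined blocks.\<close>
lemma pinned_cov_sq_le_refinement_gain:
  assumes fin: "finite \<Omega>" and \<tau>: "\<tau> \<in> configs n \<Omega>" and pos: "0 < pmf \<mu> \<tau>"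
  shows "(pinned_cov \<mu> n \<Omega> S \<tau> i j \<omega>)\<^sup>2 \<le>
    (\<Sum>y\<in>pinned n \<Omega> S \<tau>. pmf \<mu> y * (pinned_prob \<mu> n \<Omega> (insert j S) y {x. x i = \<omega>})\<^sup>2)
      / sum (pmf \<mu>) (pinned n \<Omega> S \<tau>) - (pinned_prob \<mu> n \<Omega> S \<tau> {x. x i = \<omega>})\<^sup>2"
proof -
  define K where "K = pinned n \<Omega> S \<tau>"
  have finK: "finite K" unfolding K_def by (rule finite_pinned[OF fin])
  have "pmf \<mu> \<tau> \<le> sum (pmf \<mu>) K"
    by (rule member_le_sum) (auto simp: K_def pinned_basic(1)[OF \<tau>] finite_pinned[OF fin])
  then have posK: "sum (pmf \<mu>) K > 0" using pos by linarith
  have "(sum (pmf \<mu>) (K \<inter> ({x. x i = \<omega>} \<inter> {x. x j = \<omega>})) / sum (pmf \<mu>) K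
      - (sum (pmf \<mu>) (K \<inter> {x. x i = \<omega>}) / sum (pmf \<mu>) K) * (sum (pmf \<mu>) (K \<inter> {x. x j = \<omega>}) / sum (pmf \<mu>) K))\<^sup>2
    \<le> (\<Sum>y\<in>K. pmf \<mu> y * (sum (pmf \<mu>) (pinned n \<Omega> (insert j S) y \<inter> {x. x i = \<omega>})
          / sum (pmf \<mu>) (pinned n \<Omega> (insert j S) y))\<^sup>2) / sum (pmf \<mu>) K
      - (sum (pmf \<mu>) (K \<inter> {x. x i = \<omega>}) / sum (pmf \<mu>) K)\<^sup>2"
  proof (rule cond_cov_sq_le_refinement_gain[OF finK _ posK])
    fix y assume y: "y \<in> K"
    then have yC: "y \<in> configs n \<Omega>" using pinned_basic(2)[OF \<tau>] K_def by blast
    show "y \<in> pinned n \<Omega> (insert j S) y" by (rule pinned_basic(1)[OF yC])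
    show "pinned n \<Omega> (insert j S) y \<subseteq> K" using y unfolding K_def by (rule pinned_insert_subset)
    fix z assume z: "z \<in> pinned n \<Omega> (insert j S) y"
    show "pinned n \<Omega> (insert j S) z = pinned n \<Omega> (insert j S) y" using pinned_basic(3)[OF yC z] .
    show "(z \<in> {x. x j = \<omega>}) = (y \<in> {x. x j = \<omega>})" using z unfolding pinned_def by auto
  qed simp
  then show ?thesis unfolding pinned_cov_def pinned_prob_def K_def Collect_conj_eq by simp
qed

lemma sum_swap_to_innermost:
  "(\<Sum>y\<in>K. \<Sum>i\<in>A. \<Sum>\<omega>\<in>B. f y i \<omega>) = (\<Sum>i\<in>A. \<Sum>\<omega>\<in>B. \<Sum>y\<in>K. f y i \<omega>)"
  by (rule trans[OF sum.swap], rule sum.cong[OF refl], rule sum.swap)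

lemma pinning_potential_increment:
  assumes fin: "finite \<Omega>"
  shows "pinning_potential \<mu> n \<Omega> (insert j S) - pinning_potential \<mu> n \<Omega> S \<ge>
    (\<Sum>\<tau>\<in>configs n \<Omega>. pmf \<mu> \<tau> * (\<Sum>i<n. \<Sum>\<omega>\<in>\<Omega>. (pinned_cov \<mu> n \<Omega> S \<tau> i j \<omega>)\<^sup>2))"
proof -
  define C where "C = configs n \<Omega>"
  define w where "w = pmf \<mu>"
  define P where "P T \<tau> = (\<Sum>i<n. \<Sum>\<omega>\<in>\<Omega>. (pinned_prob \<mu> n \<Omega> T \<tau> {x. x i = \<omega>})\<^sup>2)" for T \<tau>
  define avg where "avg \<tau> = (\<Sum>y\<in>pinned n \<Omega> S \<tau>. w y * P (insert j S) y) / sum w (pinned n \<Omega> S \<tau>)" for \<tau>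
  have finC: "finite C" unfolding C_def by (rule finite_configs[OF fin])
  have "pinning_potential \<mu> n \<Omega> (insert j S) = (\<Sum>\<tau>\<in>C. w \<tau> * P (insert j S) \<tau>)"
    unfolding pinning_potential_def C_def w_def P_def ..
  also have "\<dots> = (\<Sum>\<tau>\<in>C. w \<tau> * avg \<tau>)"
    unfolding avg_def
  proof (rule sum_weighted_block_average[OF finC])
    fix x assume "x \<in> C"
    then have x: "x \<in> configs n \<Omega>" by (simp add: C_def)
    show "0 \<le> w x" by (simp add: w_def)
    show "x \<in> pinned n \<Omega> S x" by (rule pinned_basic(1)[OF x])
    show "pinned n \<Omega> S x \<subseteq> C" unfolding C_def by (rule pinned_basic(2)[OF x])
    fix y assume "y \<in> pinned n \<Omega> S x"
    then show "pinned n \<Omega> S y = pinned n \<Omega> S x" by (rule pinned_basic(3)[OF x])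
  qed
  finally have "pinning_potential \<mu> n \<Omega> (insert j S) - pinning_potential \<mu> n \<Omega> S =
      (\<Sum>\<tau>\<in>C. w \<tau> * (avg \<tau> - P S \<tau>))"
    unfolding pinning_potential_def[of \<mu> n \<Omega> S] by (simp add: C_def w_def P_def sum_subtractf right_diff_distrib)
  also have "\<dots> \<ge> (\<Sum>\<tau>\<in>C. w \<tau> * (\<Sum>i<n. \<Sum>\<omega>\<in>\<Omega>. (pinned_cov \<mu> n \<Omega> S \<tau> i j \<omega>)\<^sup>2))"
  proof (rule sum_mono)
    fix \<tau> assume \<tau>: "\<tau> \<in> C"
    show "w \<tau> * (\<Sum>i<n. \<Sum>\<omega>\<in>\<Omega>. (pinned_cov \<mu> n \<Omega> S \<tau> i j \<omega>)\<^sup>2) \<le> w \<tau> * (avg \<tau> - P S \<tau>)"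
    proof (cases "w \<tau> = 0")
      case False
      then have pos: "0 < pmf \<mu> \<tau>" by (simp add: w_def order_less_le)
      have "(\<Sum>i<n. \<Sum>\<omega>\<in>\<Omega>. (pinned_cov \<mu> n \<Omega> S \<tau> i j \<omega>)\<^sup>2) \<le>
          (\<Sum>i<n. \<Sum>\<omega>\<in>\<Omega>. (\<Sum>y\<in>pinned n \<Omega> S \<tau>. w y * (pinned_prob \<mu> n \<Omega> (insert j S) y {x. x i = \<omega>})\<^sup>2)
            / sum w (pinned n \<Omega> S \<tau>) - (pinned_prob \<mu> n \<Omega> S \<tau> {x. x i = \<omega>})\<^sup>2)"
        unfolding w_def using \<tau> pos
        by (intro sum_mono pinned_cov_sq_le_refinement_gain[OF fin]) (simp_all add: C_def)
      also have "\<dots> = avg \<tau> - P S \<tau>"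
      proof -
        have "(\<Sum>y\<in>pinned n \<Omega> S \<tau>. w y * P (insert j S) y) =
            (\<Sum>i<n. \<Sum>\<omega>\<in>\<Omega>. \<Sum>y\<in>pinned n \<Omega> S \<tau>. w y * (pinned_prob \<mu> n \<Omega> (insert j S) y {x. x i = \<omega>})\<^sup>2)"
          unfolding P_def sum_distrib_left by (rule sum_swap_to_innermost)
        then show ?thesis unfolding avg_def P_def by (simp add: sum_subtractf sum_divide_distrib)
      qed
      finally show ?thesis using pos by (simp add: w_def)
    qed simp
  qed
  finally show ?thesis unfolding C_def w_def .
qed

lemma pinned_prob_nonneg: "0 \<le> pinned_prob \<mu> n \<Omega> S \<tau> A"
  unfolding pinned_prob_def by (intro divide_nonneg_nonneg sum_nonneg) auto

lemma sum_pinned_prob_le_1: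
  assumes fin: "finite \<Omega>"
  shows "(\<Sum>\<omega>\<in>\<Omega>. pinned_prob \<mu> n \<Omega> S \<tau> {x. x i = \<omega>}) \<le> 1"
proof -
  define K where "K = pinned n \<Omega> S \<tau>"
  have finK: "finite K" unfolding K_def by (rule finite_pinned[OF fin])
  have "(\<Sum>\<omega>\<in>\<Omega>. sum (pmf \<mu>) (K \<inter> {x. x i = \<omega>})) = (\<Sum>\<omega>\<in>\<Omega>. \<Sum>x\<in>K. pmf \<mu> x * (if x \<in> {x. x i = \<omega>} then 1 else 0))"
    using finK by (simp add: sum_Int_eq_sum_mult_indicator)
  also have "\<dots> = (\<Sum>x\<in>K. pmf \<mu> x * (\<Sum>\<omega>\<in>\<Omega>. if x i = \<omega> then 1 else 0))"
    by (subst sum.swap) (simp add: sum_distrib_left)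
  also have "\<dots> \<le> (\<Sum>x\<in>K. pmf \<mu> x)"
    by (intro sum_mono mult_right_le_one_le) (auto simp: fin)
  finally have "(\<Sum>\<omega>\<in>\<Omega>. sum (pmf \<mu>) (K \<inter> {x. x i = \<omega>})) \<le> sum (pmf \<mu>) K" by simp
  note le = this
  show ?thesis
  proof (cases "sum (pmf \<mu>) K = 0")
    case False
    then have "sum (pmf \<mu>) K > 0" using sum_nonneg[of K "pmf \<mu>"] by fastforce
    with le show ?thesis unfolding pinned_prob_def K_def[symmetric] sum_divide_distrib[symmetric] by simp
  next
    case True then show ?thesis unfolding pinned_prob_def K_def[symmetric] by simp
  qed
qed

lemma sum_pinned_prob_sq_le_1:
  assumes fin: "finite \<Omega>"
  shows "(\<Sum>\<omega>\<in>\<Omega>. (pinned_prob \<mu> n \<Omega> S \<tau> {x. x i = \<omega>})\<^sup>2) \<le> 1"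
proof -
  have le1: "pinned_prob \<mu> n \<Omega> S \<tau> {x. x i = \<omega>} \<le> 1" if "\<omega> \<in> \<Omega>" for \<omega>
  proof -
    have "pinned_prob \<mu> n \<Omega> S \<tau> {x. x i = \<omega>} \<le> (\<Sum>\<omega>\<in>\<Omega>. pinned_prob \<mu> n \<Omega> S \<tau> {x. x i = \<omega>})"
      by (rule member_le_sum[OF that]) (auto simp: pinned_prob_nonneg fin)
    then show ?thesis using sum_pinned_prob_le_1[OF fin, of \<mu> n S \<tau> i] by linarith
  qed
  have "(\<Sum>\<omega>\<in>\<Omega>. (pinned_prob \<mu> n \<Omega> S \<tau> {x. x i = \<omega>})\<^sup>2) \<le> (\<Sum>\<omega>\<in>\<Omega>. pinned_prob \<mu> n \<Omega> S \<tau> {x. x i = \<omega>})"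
  proof (intro sum_mono)
    fix \<omega> assume "\<omega> \<in> \<Omega>"
    then have "pinned_prob \<mu> n \<Omega> S \<tau> {x. x i = \<omega>} * pinned_prob \<mu> n \<Omega> S \<tau> {x. x i = \<omega>} \<le> 1 * pinned_prob \<mu> n \<Omega> S \<tau> {x. x i = \<omega>}"
      using le1 pinned_prob_nonneg by (intro mult_right_mono) auto
    then show "(pinned_prob \<mu> n \<Omega> S \<tau> {x. x i = \<omega>})\<^sup>2 \<le> pinned_prob \<mu> n \<Omega> S \<tau> {x. x i = \<omega>}" by (simp add: power2_eq_square)
  qed
  then show ?thesis using sum_pinned_prob_le_1[OF fin, of \<mu> n S \<tau> i] by linarith
qed

lemma pinning_potential_bounds:
  assumes fin: "finite \<Omega>" and supp: "set_pmf \<mu> \<subseteq> configs n \<Omega>"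
  shows "0 \<le> pinning_potential \<mu> n \<Omega> S" "pinning_potential \<mu> n \<Omega> S \<le> real n"
proof -
  show "0 \<le> pinning_potential \<mu> n \<Omega> S" unfolding pinning_potential_def by (intro sum_nonneg mult_nonneg_nonneg) auto
  have "pinning_potential \<mu> n \<Omega> S \<le> (\<Sum>\<tau>\<in>configs n \<Omega>. pmf \<mu> \<tau> * real n)"
    unfolding pinning_potential_def
  proof (intro sum_mono mult_left_mono)
    fix \<tau>
    have "(\<Sum>i<n. \<Sum>\<omega>\<in>\<Omega>. (pinned_prob \<mu> n \<Omega> S \<tau> {x. x i = \<omega>})\<^sup>2) \<le> (\<Sum>i<n. 1)"
      by (intro sum_mono sum_pinned_prob_sq_le_1[OF fin])
    then show "(\<Sum>i<n. \<Sum>\<omega>\<in>\<Omega>. (pinned_prob \<mu> n \<Omega> S \<tau> {x. x i = \<omega>})\<^sup>2) \<le> real n" by simp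
  qed auto
  also have "\<dots> = real n" using sum_pmf_eq_1[OF finite_configs[OF fin] supp] by (simp add: sum_distrib_right[symmetric])
  finally show "pinning_potential \<mu> n \<Omega> S \<le> real n" .
qed

lemma pinned_restrict: "pinned n \<Omega> I (restrict \<tau> I) = pinned n \<Omega> I \<tau>"
  unfolding pinned_def by auto

lemma prob_cond_dist_restrict:
  assumes fin: "finite \<Omega>" and supp: "set_pmf \<mu> \<subseteq> configs n \<Omega>" and \<tau>: "\<tau> \<in> set_pmf \<mu>"
  shows "measure_pmf.prob (cond_dist n \<Omega> \<mu> I (restrict \<tau> I)) A = pinned_prob \<mu> n \<Omega> I \<tau> A"
proof -
  define P where "P = pinned n \<Omega> I \<tau>"
  have \<sigma>: "restrict \<tau> I \<in> set_pmf (marg \<mu> I)" unfolding marg_def using \<tau> by auto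
  have cd: "cond_dist n \<Omega> \<mu> I (restrict \<tau> I) = cond_pmf \<mu> P"
    unfolding cond_dist_eq_cond_pmf[OF supp \<sigma>] pinned_restrict P_def ..
  have ne: "set_pmf \<mu> \<inter> P \<noteq> {}" unfolding P_def using \<tau> supp pinned_basic(1)[of \<tau> n \<Omega> I] by blast
  have finP: "finite P" unfolding P_def by (rule finite_pinned[OF fin])
  have mP: "measure_pmf.prob \<mu> P = sum (pmf \<mu>) P"
    by (rule measure_measure_pmf_finite[OF finP])
  have "measure_pmf.prob (cond_pmf \<mu> P) A = measure_pmf.prob (cond_pmf \<mu> P) (A \<inter> set_pmf (cond_pmf \<mu> P))"
    by (rule measure_Int_set_pmf[symmetric])
  also have "A \<inter> set_pmf (cond_pmf \<mu> P) = (P \<inter> A) \<inter> set_pmf (cond_pmf \<mu> P)"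
    using ne by (auto simp: set_cond_pmf)
  also have "measure_pmf.prob (cond_pmf \<mu> P) \<dots> = measure_pmf.prob (cond_pmf \<mu> P) (P \<inter> A)"
    by (rule measure_Int_set_pmf)
  also have "\<dots> = (\<Sum>x\<in>P \<inter> A. pmf (cond_pmf \<mu> P) x)"
    by (rule measure_measure_pmf_finite) (use finP in auto)
  also have "\<dots> = (\<Sum>x\<in>P \<inter> A. pmf \<mu> x / sum (pmf \<mu>) P)"
    by (intro sum.cong refl) (simp add: pmf_cond[OF ne] mP)
  also have "\<dots> = pinned_prob \<mu> n \<Omega> I \<tau> A"
    unfolding pinned_prob_def P_def[symmetric] by (simp add: sum_divide_distrib)
  finally show ?thesis unfolding cd .
qed

lemma sq_cov_sum_cond_dist_restrict:
  assumes fin: "finite \<Omega>" and supp: "set_pmf \<mu> \<subseteq> configs n \<Omega>" and \<tau>: "\<tau> \<in> set_pmf \<mu>"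
  shows "sq_cov_sum n \<Omega> (cond_dist n \<Omega> \<mu> I (restrict \<tau> I)) = (\<Sum>i<n. \<Sum>j<n. \<Sum>\<omega>\<in>\<Omega>. (pinned_cov \<mu> n \<Omega> I \<tau> i j \<omega>)\<^sup>2)"
  unfolding sq_cov_sum_def site_cov_def site_prob_def pair_prob_def pinned_cov_def prob_cond_dist_restrict[OF assms] ..

lemma expectation_marg:
  fixes g :: "(nat \<Rightarrow> nat) \<Rightarrow> real"
  assumes fin: "finite \<Omega>" and supp: "set_pmf \<mu> \<subseteq> configs n \<Omega>"
  shows "measure_pmf.expectation (marg \<mu> I) g = (\<Sum>\<tau>\<in>configs n \<Omega>. pmf \<mu> \<tau> * g (restrict \<tau> I))"
  unfolding marg_def integral_map_pmf
  by (subst integral_measure_pmf_real[OF finite_configs[OF fin]]) (use supp in \<open>auto simp: mult.commute\<close>)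

lemma expectation_marg_sq_cov_sum:
  assumes fin: "finite \<Omega>" and supp: "set_pmf \<mu> \<subseteq> configs n \<Omega>"
  shows "measure_pmf.expectation (marg \<mu> I) (\<lambda>\<sigma>. sq_cov_sum n \<Omega> (cond_dist n \<Omega> \<mu> I \<sigma>)) = pinned_cov_mass \<mu> n \<Omega> I"
  unfolding expectation_marg[OF fin supp] pinned_cov_mass_def
proof (intro sum.cong refl)
  fix \<tau> assume "\<tau> \<in> configs n \<Omega>"
  show "pmf \<mu> \<tau> * sq_cov_sum n \<Omega> (cond_dist n \<Omega> \<mu> I (restrict \<tau> I)) =
        pmf \<mu> \<tau> * (\<Sum>i<n. \<Sum>j<n. \<Sum>\<omega>\<in>\<Omega>. (pinned_cov \<mu> n \<Omega> I \<tau> i j \<omega>)\<^sup>2)"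
  proof (cases "\<tau> \<in> set_pmf \<mu>")
    case True then show ?thesis by (simp add: sq_cov_sum_cond_dist_restrict[OF fin supp])
  next
    case False then show ?thesis by (simp add: set_pmf_eq)
  qed
qed

definition nsubsets :: "nat \<Rightarrow> nat \<Rightarrow> nat set set" where
  "nsubsets n t = {I. I \<subseteq> {..<n} \<and> card I = t}"

lemma finite_nsubsets: "finite (nsubsets n t)"
  unfolding nsubsets_def by (rule finite_subset[of _ "Pow {..<n}"]) auto

lemma card_nsubsets: "card (nsubsets n t) = n choose t"
  unfolding nsubsets_def using n_subsets[of "{..<n}" t] by simp

lemma sum_nsubsets_insert:
  fixes f :: "nat set \<Rightarrow> real"
  shows "(\<Sum>S\<in>nsubsets n t. \<Sum>j\<in>{..<n} - S. f (insert j S)) = real (Suc t) * (\<Sum>S\<in>nsubsets n (Suc t). f S)"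
proof -
  define A where "A = Sigma (nsubsets n t) (\<lambda>S. {..<n} - S)"
  define B where "B = Sigma (nsubsets n (Suc t)) (\<lambda>S. S)"
  define h where "h = (\<lambda>p::nat set \<times> nat. (insert (snd p) (fst p), snd p))"
  define h' where "h' = (\<lambda>p::nat set \<times> nat. (fst p - {snd p}, snd p))"
  have bij: "bij_betw h A B"
  proof (rule bij_betw_byWitness[where f'=h'])
    show "\<forall>a\<in>A. h' (h a) = a" unfolding A_def h_def h'_def by auto
    show "\<forall>a\<in>B. h (h' a) = a" unfolding B_def h_def h'_def by auto
    show "h ` A \<subseteq> B"
    proof
      fix q assume "q \<in> h ` A"
      then obtain S j where S: "S \<in> nsubsets n t" and j: "j \<in> {..<n} - S" and q: "q = (insert j S, j)"
        unfolding A_def h_def by auto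
      have finS: "finite S" using S unfolding nsubsets_def by (auto intro: finite_subset)
      show "q \<in> B" unfolding q B_def using S j finS by (auto simp: nsubsets_def)
    qed
    show "h' ` B \<subseteq> A"
    proof
      fix q assume "q \<in> h' ` B"
      then obtain S j where S: "S \<in> nsubsets n (Suc t)" and j: "j \<in> S" and q: "q = (S - {j}, j)"
        unfolding B_def h'_def by auto
      have finS: "finite S" using S unfolding nsubsets_def by (auto intro: finite_subset)
      show "q \<in> A" unfolding q A_def using S j finS by (auto simp: nsubsets_def)
    qed
  qed
  have "(\<Sum>S\<in>nsubsets n t. \<Sum>j\<in>{..<n} - S. f (insert j S)) = (\<Sum>p\<in>A. f (fst (h p)))"
    unfolding A_def h_def by (subst sum.Sigma) (auto simp: finite_nsubsets case_prod_unfold)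
  also have "\<dots> = (\<Sum>p\<in>B. f (fst p))" using sum.reindex_bij_betw[OF bij, of "\<lambda>p. f (fst p)"] .
  also have "\<dots> = (\<Sum>S\<in>nsubsets n (Suc t). \<Sum>j\<in>S. f S)"
    unfolding B_def by (subst sum.Sigma) (auto simp: finite_nsubsets nsubsets_def case_prod_unfold intro: finite_subset)
  also have "\<dots> = (\<Sum>S\<in>nsubsets n (Suc t). real (Suc t) * f S)"
    by (intro sum.cong refl) (simp add: nsubsets_def)
  finally show ?thesis by (simp add: sum_distrib_left)
qed

lemma pinned_cov_mass_le_increments:
  assumes fin: "finite \<Omega>" and S: "S \<in> nsubsets n t"
  shows "pinned_cov_mass \<mu> n \<Omega> S \<le> (\<Sum>j\<in>{..<n} - S. pinning_potential \<mu> n \<Omega> (insert j S)) - real (n - t) * pinning_potential \<mu> n \<Omega> S"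
proof -
  have SS: "S \<subseteq> {..<n}" and cS: "card S = t" using S by (auto simp: nsubsets_def)
  have finS: "finite S" using SS finite_subset by blast
  have "pinned_cov_mass \<mu> n \<Omega> S = (\<Sum>\<tau>\<in>configs n \<Omega>. pmf \<mu> \<tau> * (\<Sum>j<n. \<Sum>i<n. \<Sum>\<omega>\<in>\<Omega>. (pinned_cov \<mu> n \<Omega> S \<tau> i j \<omega>)\<^sup>2))"
    unfolding pinned_cov_mass_def by (intro sum.cong refl arg_cong[where f="\<lambda>x. _ * x"] sum.swap)
  also have "\<dots> = (\<Sum>j<n. \<Sum>\<tau>\<in>configs n \<Omega>. pmf \<mu> \<tau> * (\<Sum>i<n. \<Sum>\<omega>\<in>\<Omega>. (pinned_cov \<mu> n \<Omega> S \<tau> i j \<omega>)\<^sup>2))"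
    by (simp add: sum_distrib_left sum.swap[of _ "configs n \<Omega>"])
  also have "\<dots> \<le> (\<Sum>j<n. pinning_potential \<mu> n \<Omega> (insert j S) - pinning_potential \<mu> n \<Omega> S)"
    by (intro sum_mono pinning_potential_increment[OF fin])
  also have "\<dots> = (\<Sum>j\<in>{..<n} - S. pinning_potential \<mu> n \<Omega> (insert j S) - pinning_potential \<mu> n \<Omega> S)"
  proof -
    have "{..<n} = ({..<n} - S) \<union> S" using SS by auto
    then have "(\<Sum>j<n. pinning_potential \<mu> n \<Omega> (insert j S) - pinning_potential \<mu> n \<Omega> S) =
      (\<Sum>j\<in>{..<n} - S. pinning_potential \<mu> n \<Omega> (insert j S) - pinning_potential \<mu> n \<Omega> S) + (\<Sum>j\<in>S. pinning_potential \<mu> n \<Omega> (insert j S) - pinning_potential \<mu> n \<Omega> S)"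
      by (metis (no_types, lifting) Diff_disjoint finS finite_Diff finite_lessThan sum.union_disjoint inf_commute)
    also have "(\<Sum>j\<in>S. pinning_potential \<mu> n \<Omega> (insert j S) - pinning_potential \<mu> n \<Omega> S) = 0"
      by (intro sum.neutral) (auto simp: insert_absorb)
    finally show ?thesis by simp
  qed
  also have "\<dots> = (\<Sum>j\<in>{..<n} - S. pinning_potential \<mu> n \<Omega> (insert j S)) - real (n - t) * pinning_potential \<mu> n \<Omega> S"
    using card_Diff_subset[OF finS SS] cS by (simp add: sum_subtractf)
  finally show ?thesis .
qed

lemma sum_pinned_cov_mass_le:
  assumes fin: "finite \<Omega>"
  shows "(\<Sum>S\<in>nsubsets n t. pinned_cov_mass \<mu> n \<Omega> S) \<le>
     real (Suc t) * (\<Sum>S\<in>nsubsets n (Suc t). pinning_potential \<mu> n \<Omega> S) - real (n - t) * (\<Sum>S\<in>nsubsets n t. pinning_potential \<mu> n \<Omega> S)"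
proof -
  have "(\<Sum>S\<in>nsubsets n t. pinned_cov_mass \<mu> n \<Omega> S) \<le> (\<Sum>S\<in>nsubsets n t. (\<Sum>j\<in>{..<n} - S. pinning_potential \<mu> n \<Omega> (insert j S)) - real (n - t) * pinning_potential \<mu> n \<Omega> S)"
    by (intro sum_mono pinned_cov_mass_le_increments[OF fin])
  also have "\<dots> = real (Suc t) * (\<Sum>S\<in>nsubsets n (Suc t). pinning_potential \<mu> n \<Omega> S) - real (n - t) * (\<Sum>S\<in>nsubsets n t. pinning_potential \<mu> n \<Omega> S)"
    by (simp add: sum_subtractf sum_nsubsets_insert sum_distrib_left)
  finally show ?thesis .
qed

definition avg_potential :: "(nat \<Rightarrow> nat) pmf \<Rightarrow> nat \<Rightarrow> nat set \<Rightarrow> nat \<Rightarrow> real" where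
  "avg_potential \<mu> n \<Omega> t = (\<Sum>S\<in>nsubsets n t. pinning_potential \<mu> n \<Omega> S) / real (n choose t)"

lemma real_Suc_times_binomial_Suc: "real (Suc t) * real (n choose Suc t) = real (n - t) * real (n choose t)"
proof -
  have "Suc t * (n choose Suc t) = (n - t) * (n choose t)"
    using binomial_absorption[of t n] binomial_absorb_comp[of n t] by simp
  then show ?thesis by (metis of_nat_mult)
qed

lemma avg_potential_bounds:
  assumes fin: "finite \<Omega>" and supp: "set_pmf \<mu> \<subseteq> configs n \<Omega>" and t: "t \<le> n"
  shows "0 \<le> avg_potential \<mu> n \<Omega> t" "avg_potential \<mu> n \<Omega> t \<le> real n"
proof -
  have B: "real (n choose t) > 0" using t by simp
  show "0 \<le> avg_potential \<mu> n \<Omega> t" unfolding avg_potential_def using pinning_potential_bounds(1)[OF fin supp]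
    by (intro divide_nonneg_pos sum_nonneg B) auto
  have "(\<Sum>S\<in>nsubsets n t. pinning_potential \<mu> n \<Omega> S) \<le> (\<Sum>S\<in>nsubsets n t. real n)"
    by (intro sum_mono pinning_potential_bounds(2)[OF fin supp])
  also have "\<dots> = real (n choose t) * real n" by (simp add: card_nsubsets)
  finally show "avg_potential \<mu> n \<Omega> t \<le> real n" unfolding avg_potential_def using B by (simp add: divide_le_eq mult.commute)
qed

lemma pinned_cov_mass_nonneg: "0 \<le> pinned_cov_mass \<mu> n \<Omega> S"
  unfolding pinned_cov_mass_def by (intro sum_nonneg mult_nonneg_nonneg) auto

lemma avg_pinned_cov_mass_le:
  assumes fin: "finite \<Omega>" and t: "Suc t \<le> n"
  shows "(\<Sum>S\<in>nsubsets n t. pinned_cov_mass \<mu> n \<Omega> S) / real (n choose t) \<le> real n * (avg_potential \<mu> n \<Omega> (Suc t) - avg_potential \<mu> n \<Omega> t)"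
proof -
  define P0 where "P0 = (\<Sum>S\<in>nsubsets n t. pinning_potential \<mu> n \<Omega> S)"
  define P1 where "P1 = (\<Sum>S\<in>nsubsets n (Suc t). pinning_potential \<mu> n \<Omega> S)"
  define B0 where "B0 = real (n choose t)"
  define B1 where "B1 = real (n choose Suc t)"
  have B0: "B0 > 0" "B1 > 0" using t by (auto simp: B0_def B1_def)
  have rel: "real (Suc t) * B1 = real (n - t) * B0" unfolding B0_def B1_def by (rule real_Suc_times_binomial_Suc)
  have "(\<Sum>S\<in>nsubsets n t. pinned_cov_mass \<mu> n \<Omega> S) \<le> real (Suc t) * P1 - real (n - t) * P0"
    unfolding P0_def P1_def by (rule sum_pinned_cov_mass_le[OF fin])
  also have "real (Suc t) * P1 = real (Suc t) * B1 * (P1 / B1)" using B0 by simp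
  also have "\<dots> = real (n - t) * B0 * (P1 / B1)" by (simp only: rel)
  finally have "(\<Sum>S\<in>nsubsets n t. pinned_cov_mass \<mu> n \<Omega> S) / B0 \<le> (real (n - t) * B0 * (P1 / B1) - real (n - t) * P0) / B0"
    using B0 by (simp add: divide_right_mono)
  also have "\<dots> = real (n - t) * (P1 / B1 - P0 / B0)" using B0 by (simp add: field_simps)
  finally have le: "(\<Sum>S\<in>nsubsets n t. pinned_cov_mass \<mu> n \<Omega> S) / B0 \<le> real (n - t) * (P1 / B1 - P0 / B0)" .
  have "0 \<le> (\<Sum>S\<in>nsubsets n t. pinned_cov_mass \<mu> n \<Omega> S) / B0" using B0 by (intro divide_nonneg_pos sum_nonneg pinned_cov_mass_nonneg) auto
  then have "0 \<le> real (n - t) * (P1 / B1 - P0 / B0)" using le by linarith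
  moreover have "real (n - t) > 0" using t by simp
  ultimately have d0: "0 \<le> P1 / B1 - P0 / B0" by (simp add: zero_le_mult_iff)
  have "real (n - t) * (P1 / B1 - P0 / B0) \<le> real n * (P1 / B1 - P0 / B0)"
    by (intro mult_right_mono d0) simp
  with le show ?thesis unfolding avg_potential_def P0_def P1_def B0_def B1_def by simp
qed

lemma sum_avg_pinned_cov_mass_le:
  assumes fin: "finite \<Omega>" and supp: "set_pmf \<mu> \<subseteq> configs n \<Omega>" and T: "Suc T \<le> n"
  shows "(\<Sum>t\<in>{1..T}. (\<Sum>S\<in>nsubsets n t. pinned_cov_mass \<mu> n \<Omega> S) / real (n choose t)) \<le> real n * real n"
proof -
  have "(\<Sum>t\<in>{1..T}. (\<Sum>S\<in>nsubsets n t. pinned_cov_mass \<mu> n \<Omega> S) / real (n choose t)) \<le>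
      (\<Sum>t\<in>{1..T}. real n * (avg_potential \<mu> n \<Omega> (Suc t) - avg_potential \<mu> n \<Omega> t))"
    by (intro sum_mono avg_pinned_cov_mass_le[OF fin]) (use T in auto)
  also have "\<dots> = real n * (\<Sum>t\<in>{1..T}. avg_potential \<mu> n \<Omega> (Suc t) - avg_potential \<mu> n \<Omega> t)" by (simp add: sum_distrib_left)
  also have "(\<Sum>t\<in>{1..T}. avg_potential \<mu> n \<Omega> (Suc t) - avg_potential \<mu> n \<Omega> t) = avg_potential \<mu> n \<Omega> (Suc T) - avg_potential \<mu> n \<Omega> 1"
    by (rule sum_Suc_diff) simp
  also have "\<dots> \<le> real n" using avg_potential_bounds[OF fin supp, of "Suc T"] avg_potential_bounds[OF fin supp, of 1] T by simp
  finally show ?thesis by (simp add: mult_left_mono)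
qed

lemma nsubsets_nonempty: "t \<le> n \<Longrightarrow> nsubsets n t \<noteq> {}"
  using card_nsubsets[of n t] by (metis card.empty zero_less_binomial_iff less_numeral_extra(3))

lemma rand_subset_eq_nsubsets: "rand_subset n \<Theta> = bind_pmf \<Theta> (\<lambda>\<theta>. pmf_of_set (nsubsets n \<theta>))"
  unfolding rand_subset_def nsubsets_def ..

lemma set_pmf_rand_subset:
  assumes "\<And>\<theta>. \<theta> \<in> set_pmf \<Theta> \<Longrightarrow> \<theta> \<le> n"
  shows "set_pmf (rand_subset n \<Theta>) \<subseteq> Pow {..<n}"
  unfolding rand_subset_eq_nsubsets using assms nsubsets_nonempty finite_nsubsets by (auto simp: nsubsets_def)

lemma expectation_rand_subset_uniform:
  fixes F :: "nat set \<Rightarrow> real"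
  assumes T: "1 \<le> T" "T \<le> n"
  shows "measure_pmf.expectation (rand_subset n (pmf_of_set {1..T})) F =
    (\<Sum>\<theta>\<in>{1..T}. (\<Sum>I\<in>nsubsets n \<theta>. F I) / real (n choose \<theta>)) / real T"
proof -
  have "measure_pmf.expectation (rand_subset n (pmf_of_set {1..T})) F =
      (\<Sum>\<theta>\<in>{1..T}. measure_pmf.expectation (pmf_of_set (nsubsets n \<theta>)) F /\<^sub>R real (card {1..T}))"
    unfolding rand_subset_eq_nsubsets
    by (rule pmf_expectation_bind_pmf_of_set) (use T nsubsets_nonempty finite_nsubsets in auto)
  also have "\<dots> = (\<Sum>\<theta>\<in>{1..T}. (\<Sum>I\<in>nsubsets n \<theta>. F I) / real (n choose \<theta>) / real T)"
  proof (intro sum.cong refl)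
    fix \<theta> assume "\<theta> \<in> {1..T}"
    then have "nsubsets n \<theta> \<noteq> {}" using T nsubsets_nonempty by auto
    then show "measure_pmf.expectation (pmf_of_set (nsubsets n \<theta>)) F /\<^sub>R real (card {1..T}) =
        (\<Sum>I\<in>nsubsets n \<theta>. F I) / real (n choose \<theta>) / real T"
      by (simp add: integral_pmf_of_set finite_nsubsets card_nsubsets divide_inverse_commute)
  qed
  finally show ?thesis by (simp add: sum_divide_distrib)
qed

lemma expectation_rand_pin:
  fixes h :: "nat set \<times> (nat \<Rightarrow> nat) \<Rightarrow> real"
  assumes fin: "finite \<Omega>" and supp: "set_pmf \<mu> \<subseteq> configs n \<Omega>"
    and \<Theta>: "\<And>\<theta>. \<theta> \<in> set_pmf \<Theta> \<Longrightarrow> \<theta> \<le> n"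
  shows "measure_pmf.expectation (rand_pin n \<Theta> \<mu>) h =
     measure_pmf.expectation (rand_subset n \<Theta>) (\<lambda>I. measure_pmf.expectation (marg \<mu> I) (\<lambda>\<sigma>. h (I, \<sigma>)))"
proof -
  have sub: "set_pmf (rand_subset n \<Theta>) \<subseteq> Pow {..<n}" by (rule set_pmf_rand_subset[OF \<Theta>])
  have "measure_pmf.expectation (rand_pin n \<Theta> \<mu>) h =
     (\<Sum>I\<in>Pow {..<n}. pmf (rand_subset n \<Theta>) I *\<^sub>R measure_pmf.expectation (map_pmf (\<lambda>\<sigma>. (I, \<sigma>)) (marg \<mu> I)) h)"
    unfolding rand_pin_def
    by (rule pmf_expectation_bind) (use sub finite_set_pmf_marg[OF fin supp] in auto)
  also have "\<dots> = measure_pmf.expectation (rand_subset n \<Theta>) (\<lambda>I. measure_pmf.expectation (marg \<mu> I) (\<lambda>\<sigma>. h (I, \<sigma>)))"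
    by (subst integral_measure_pmf[of "Pow {..<n}"]) (use sub in auto)
  finally show ?thesis .
qed

lemma finite_set_pmf_rand_subset:
  assumes "\<And>\<theta>. \<theta> \<in> set_pmf \<Theta> \<Longrightarrow> \<theta> \<le> n"
  shows "finite (set_pmf (rand_subset n \<Theta>))"
  using set_pmf_rand_subset[OF assms] finite_subset by blast

lemma finite_set_pmf_rand_pin:
  assumes fin: "finite \<Omega>" and supp: "set_pmf \<mu> \<subseteq> configs n \<Omega>"
    and \<Theta>: "\<And>\<theta>. \<theta> \<in> set_pmf \<Theta> \<Longrightarrow> \<theta> \<le> n"
  shows "finite (set_pmf (rand_pin n \<Theta> \<mu>))"
  unfolding rand_pin_def using finite_set_pmf_rand_subset[OF \<Theta>] finite_set_pmf_marg[OF fin supp] by simp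

lemma set_pmf_rand_pinD:
  assumes "p \<in> set_pmf (rand_pin n \<Theta> \<mu>)"
  shows "snd p \<in> set_pmf (marg \<mu> (fst p))"
  using assms unfolding rand_pin_def by auto

lemma expectation_rand_pin_sq_cov_sum_le:
  assumes fin: "finite \<Omega>" and supp: "set_pmf \<mu> \<subseteq> configs n \<Omega>" and T: "1 \<le> T" "Suc T \<le> n"
  shows "measure_pmf.expectation (rand_pin n (pmf_of_set {1..T}) \<mu>) (\<lambda>p. sq_cov_sum n \<Omega> (cond_dist n \<Omega> \<mu> (fst p) (snd p)))
     \<le> real n * real n / real T"
proof -
  have \<Theta>: "\<And>\<theta>. \<theta> \<in> set_pmf (pmf_of_set {1..T}) \<Longrightarrow> \<theta> \<le> n" using T by auto
  have "measure_pmf.expectation (rand_pin n (pmf_of_set {1..T}) \<mu>) (\<lambda>p. sq_cov_sum n \<Omega> (cond_dist n \<Omega> \<mu> (fst p) (snd p)))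
      = measure_pmf.expectation (rand_subset n (pmf_of_set {1..T})) (\<lambda>I. pinned_cov_mass \<mu> n \<Omega> I)"
    by (subst expectation_rand_pin[OF fin supp \<Theta>]) (simp_all add: expectation_marg_sq_cov_sum[OF fin supp])
  also have "\<dots> = (\<Sum>\<theta>\<in>{1..T}. (\<Sum>I\<in>nsubsets n \<theta>. pinned_cov_mass \<mu> n \<Omega> I) / real (n choose \<theta>)) / real T"
    by (rule expectation_rand_subset_uniform) (use T in auto)
  also have "\<dots> \<le> real n * real n / real T"
    by (intro divide_right_mono sum_avg_pinned_cov_mass_le[OF fin supp T(2)]) simp
  finally show ?thesis .
qed

lemma expectation_rand_pin_sqrt_sq_cov_sum_le:
  assumes fin: "finite \<Omega>" and supp: "set_pmf \<mu> \<subseteq> configs n \<Omega>" and T: "1 \<le> T" "Suc T \<le> n"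
  shows "measure_pmf.expectation (rand_pin n (pmf_of_set {1..T}) \<mu>)
      (\<lambda>p. sqrt (sq_cov_sum n \<Omega> (cond_dist n \<Omega> \<mu> (fst p) (snd p))) / real n) \<le> 1 / sqrt (real T)"
proof -
  let ?R = "rand_pin n (pmf_of_set {1..T}) \<mu>"
  have \<Theta>: "\<And>\<theta>. \<theta> \<in> set_pmf (pmf_of_set {1..T}) \<Longrightarrow> \<theta> \<le> n" using T by auto
  have finR: "finite (set_pmf ?R)" by (rule finite_set_pmf_rand_pin[OF fin supp \<Theta>])
  have n0: "real n > 0" using T by simp
  have "measure_pmf.expectation ?R (\<lambda>p. sqrt (sq_cov_sum n \<Omega> (cond_dist n \<Omega> \<mu> (fst p) (snd p))) / real n)
     = measure_pmf.expectation ?R (\<lambda>p. sqrt (sq_cov_sum n \<Omega> (cond_dist n \<Omega> \<mu> (fst p) (snd p)))) / real n"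
    by simp
  also have "\<dots> \<le> sqrt (measure_pmf.expectation ?R (\<lambda>p. sq_cov_sum n \<Omega> (cond_dist n \<Omega> \<mu> (fst p) (snd p)))) / real n"
    by (intro divide_right_mono expectation_sqrt_le finR sq_cov_sum_nonneg) simp
  also have "\<dots> \<le> sqrt (real n * real n / real T) / real n"
    by (intro divide_right_mono real_sqrt_le_mono expectation_rand_pin_sq_cov_sum_le[OF fin supp T]) simp
  also have "\<dots> = 1 / sqrt (real T)"
    using n0 by (simp add: real_sqrt_divide real_sqrt_mult)
  finally show ?thesis .
qed

lemma expectation_cut_dist_cond_dist_le:
  assumes fin: "finite \<Omega>" and ne: "\<Omega> \<noteq> {}" and supp: "set_pmf \<mu> \<subseteq> configs n \<Omega>" and T: "1 \<le> T" "Suc T \<le> n"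
  shows "measure_pmf.expectation (rand_pin n (pmf_of_set {1..T}) \<mu>)
     (\<lambda>(I, \<sigma>). cut_dist n \<Omega> (cond_dist n \<Omega> \<mu> I \<sigma>) (prod_marg n (cond_dist n \<Omega> \<mu> I \<sigma>)))
     \<le> sqrt (1 / real n + 1 / sqrt (real T))"
proof -
  let ?R = "rand_pin n (pmf_of_set {1..T}) \<mu>"
  define h where "h = (\<lambda>p. sqrt (sq_cov_sum n \<Omega> (cond_dist n \<Omega> \<mu> (fst p) (snd p))) / real n)"
  have \<Theta>: "\<And>\<theta>. \<theta> \<in> set_pmf (pmf_of_set {1..T}) \<Longrightarrow> \<theta> \<le> n" using T by auto
  have finR: "finite (set_pmf ?R)" by (rule finite_set_pmf_rand_pin[OF fin supp \<Theta>])
  have n0: "n > 0" using T by simp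
  have int: "\<And>g::_ \<Rightarrow> real. integrable ?R g" by (rule integrable_measure_pmf_finite[OF finR])
  have h0: "\<And>p. 0 \<le> h p" unfolding h_def by (simp add: sq_cov_sum_nonneg)
  have "measure_pmf.expectation ?R
     (\<lambda>(I, \<sigma>). cut_dist n \<Omega> (cond_dist n \<Omega> \<mu> I \<sigma>) (prod_marg n (cond_dist n \<Omega> \<mu> I \<sigma>)))
     \<le> measure_pmf.expectation ?R (\<lambda>p. sqrt (1 / real n + h p))"
  proof (rule integral_mono_AE[OF int int])
    show "AE p in measure_pmf ?R. (case p of (I, \<sigma>) \<Rightarrow> cut_dist n \<Omega> (cond_dist n \<Omega> \<mu> I \<sigma>) (prod_marg n (cond_dist n \<Omega> \<mu> I \<sigma>)))
        \<le> sqrt (1 / real n + h p)"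
    proof (rule AE_pmfI)
      fix p assume p: "p \<in> set_pmf ?R"
      obtain I \<sigma> where p_eq: "p = (I, \<sigma>)" by (cases p)
      have "\<sigma> \<in> set_pmf (marg \<mu> I)" using set_pmf_rand_pinD[OF p] p_eq by simp
      then have cs: "set_pmf (cond_dist n \<Omega> \<mu> I \<sigma>) \<subseteq> configs n \<Omega>" by (rule set_pmf_cond_dist[OF supp])
      show "(case p of (I, \<sigma>) \<Rightarrow> cut_dist n \<Omega> (cond_dist n \<Omega> \<mu> I \<sigma>) (prod_marg n (cond_dist n \<Omega> \<mu> I \<sigma>)))
        \<le> sqrt (1 / real n + h p)"
        unfolding p_eq h_def using cut_dist_prod_marg_le[OF fin ne n0 cs] by simp
    qed
  qed
  also have "\<dots> \<le> sqrt (measure_pmf.expectation ?R (\<lambda>p. 1 / real n + h p))"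
    by (rule expectation_sqrt_le[OF finR]) (use h0 in auto)
  also have "measure_pmf.expectation ?R (\<lambda>p. 1 / real n + h p) = 1 / real n + measure_pmf.expectation ?R h"
    using int by simp
  also have "\<dots> \<le> 1 / real n + 1 / sqrt (real T)"
    using expectation_rand_pin_sqrt_sq_cov_sum_le[OF fin supp T] unfolding h_def by simp
  finally show ?thesis by simp
qed

lemma expectation_cut_dist_bar_mix_le:
  assumes fin: "finite \<Omega>" and ne: "\<Omega> \<noteq> {}" and supp: "set_pmf \<mu> \<subseteq> configs n \<Omega>" and T: "1 \<le> T" "Suc T \<le> n"
  shows "measure_pmf.expectation (rand_subset n (pmf_of_set {1..T}))
     (\<lambda>I. cut_dist n \<Omega> \<mu> (bar_mix n \<Omega> \<mu> I)) \<le> sqrt (1 / real n + 1 / sqrt (real T))"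
proof -
  let ?S = "rand_subset n (pmf_of_set {1..T})"
  let ?R = "rand_pin n (pmf_of_set {1..T}) \<mu>"
  define h where "h = (\<lambda>p. sqrt (sq_cov_sum n \<Omega> (cond_dist n \<Omega> \<mu> (fst p) (snd p))) / real n)"
  define g where "g = (\<lambda>I. measure_pmf.expectation (marg \<mu> I) (\<lambda>\<sigma>. h (I, \<sigma>)))"
  have \<Theta>: "\<And>\<theta>. \<theta> \<in> set_pmf (pmf_of_set {1..T}) \<Longrightarrow> \<theta> \<le> n" using T by auto
  have finS: "finite (set_pmf ?S)" by (rule finite_set_pmf_rand_subset[OF \<Theta>])
  have n0: "n > 0" using T by simp
  have int: "\<And>g::_ \<Rightarrow> real. integrable ?S g" by (rule integrable_measure_pmf_finite[OF finS])
  have g0: "\<And>I. 0 \<le> g I" unfolding g_def h_def by (intro integral_nonneg_AE AE_pmfI) (simp add: sq_cov_sum_nonneg)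
  have "measure_pmf.expectation ?S (\<lambda>I. cut_dist n \<Omega> \<mu> (bar_mix n \<Omega> \<mu> I))
     \<le> measure_pmf.expectation ?S (\<lambda>I. sqrt (1 / real n + g I))"
  proof (rule integral_mono_AE[OF int int], rule AE_pmfI)
    fix I
    have "cut_dist n \<Omega> \<mu> (bar_mix n \<Omega> \<mu> I) \<le>
     sqrt (1 / real n + measure_pmf.expectation (marg \<mu> I) (\<lambda>\<sigma>. sqrt (sq_cov_sum n \<Omega> (cond_dist n \<Omega> \<mu> I \<sigma>))) / real n)"
      by (rule cut_dist_bar_mix_le[OF fin ne n0 supp])
    also have "measure_pmf.expectation (marg \<mu> I) (\<lambda>\<sigma>. sqrt (sq_cov_sum n \<Omega> (cond_dist n \<Omega> \<mu> I \<sigma>))) / real n = g I"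
      unfolding g_def h_def by simp
    finally show "cut_dist n \<Omega> \<mu> (bar_mix n \<Omega> \<mu> I) \<le> sqrt (1 / real n + g I)" .
  qed
  also have "\<dots> \<le> sqrt (measure_pmf.expectation ?S (\<lambda>I. 1 / real n + g I))"
    by (rule expectation_sqrt_le[OF finS]) (use g0 in auto)
  also have "measure_pmf.expectation ?S (\<lambda>I. 1 / real n + g I) = 1 / real n + measure_pmf.expectation ?S g"
    using int by simp
  also have "measure_pmf.expectation ?S g = measure_pmf.expectation ?R h"
    unfolding g_def by (rule expectation_rand_pin[OF fin supp \<Theta>, symmetric])
  also have "1 / real n + \<dots> \<le> 1 / real n + 1 / sqrt (real T)"
    using expectation_rand_pin_sqrt_sq_cov_sum_le[OF fin supp T] unfolding h_def by simp
  finally show ?thesis by simp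
qed

lemma ln_2_ge_half: "1/2 \<le> ln (2::real)"
proof -
  have "exp (1/2::real) \<le> 2"
  proof (rule ccontr)
    assume "\<not> exp (1/2::real) \<le> 2"
    then have "2 * 2 < exp (1/2::real) * exp (1/2)" by (intro mult_strict_mono) auto
    also have "\<dots> = exp 1" by (simp add: exp_add[symmetric])
    finally show False using exp_le by simp
  qed
  then show ?thesis using ln_ge_iff[of 2 "1/2"] by simp
qed

lemma pinning_depth_lt:
  fixes \<epsilon> :: real
  assumes \<epsilon>: "0 < \<epsilon>" "\<epsilon> < 1/2" and k: "2 \<le> k"
  shows "real (nat \<lceil>4 / \<epsilon>^4\<rceil> + 1) < (2 * ln (real k) / \<epsilon>) powr 10"
proof -
  define x where "x = 1 / \<epsilon>"
  have x2: "2 \<le> x" unfolding x_def using \<epsilon> by (simp add: field_simps)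
  have "ln 2 \<le> ln (real k)" using k by simp
  then have "1/2 \<le> ln (real k)" using ln_2_ge_half by linarith
  then have x_le: "x \<le> 2 * ln (real k) / \<epsilon>" unfolding x_def using \<epsilon> by (simp add: divide_right_mono)
  have "real (nat \<lceil>4 / \<epsilon>^4\<rceil> + 1) \<le> 4 * x^4 + 2"
    unfolding x_def using \<epsilon> by (simp add: power_one_over) linarith
  also have "\<dots> < x^10"
  proof -
    have "16 \<le> x^4" "64 \<le> x^6" using power_mono[OF x2, of 4] power_mono[OF x2, of 6] by simp_all
    then have "x^4 * 64 \<le> x^4 * x^6" by (intro mult_left_mono) auto
    then show ?thesis using \<open>16 \<le> x^4\<close> by (simp add: power_add[symmetric])
  qed
  also have "\<dots> \<le> (2 * ln (real k) / \<epsilon>)^10" using x_le x2 by (intro power_mono) auto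
  also have "\<dots> = (2 * ln (real k) / \<epsilon>) powr 10" using x_le x2 by (simp add: powr_numeral)
  finally show ?thesis .
qed

lemma pinning_error_lt:
  fixes \<epsilon> :: real
  assumes \<epsilon>: "0 < \<epsilon>" and T: "4 / \<epsilon>^4 \<le> real T" and n: "2 / \<epsilon>^2 < real n"
  shows "sqrt (1 / real n + 1 / sqrt (real T)) < \<epsilon>"
proof -
  have pos: "0 < 2 / \<epsilon>^2" using \<epsilon> by simp
  then have "0 < real n" using n by linarith
  moreover have "2 < real n * \<epsilon>^2" using n \<epsilon> by (simp add: field_simps)
  ultimately have "1 / real n < \<epsilon>^2 / 2" by (simp add: field_simps)
  moreover have "1 / sqrt (real T) \<le> \<epsilon>^2 / 2"
  proof -
    have "sqrt (4 / \<epsilon>^4) = 2 / \<epsilon>^2"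
      using \<epsilon> by (simp add: real_sqrt_divide power4_eq_xxxx power2_eq_square real_sqrt_mult)
    then have "2 / \<epsilon>^2 \<le> sqrt (real T)" using T real_sqrt_le_mono by metis
    moreover have "0 < sqrt (real T) * (2 / \<epsilon>^2)" using calculation pos by (intro mult_pos_pos) linarith+
    ultimately have "1 / sqrt (real T) \<le> 1 / (2 / \<epsilon>^2)" by (intro divide_left_mono) auto
    then show ?thesis by simp
  qed
  ultimately have "sqrt (1 / real n + 1 / sqrt (real T)) < sqrt (\<epsilon>^2)"
    by (intro real_sqrt_less_mono) linarith
  then show ?thesis using \<epsilon> by simp
qed

theorem theorem2p4:
  shows "\<exists>c::real. c > 0 \<and>
    (\<forall>\<Omega>::nat set. finite \<Omega> \<and> card \<Omega> \<ge> 2 \<longrightarrow>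
      (\<forall>\<epsilon>::real. 0 < \<epsilon> \<and> \<epsilon> < 1/2 \<longrightarrow>
        (\<exists>n0::nat. n0 > 0 \<and> (\<exists>\<Theta>::nat pmf.
          (\<forall>\<theta>\<in>set_pmf \<Theta>. 0 < \<theta> \<and> real \<theta> < (2 * ln (real (card \<Omega>)) / \<epsilon>) powr c \<and> \<theta> \<le> n0) \<and>
          (\<forall>n::nat. n > n0 \<longrightarrow> (\<forall>\<mu>::(nat \<Rightarrow> nat) pmf. set_pmf \<mu> \<subseteq> configs n \<Omega> \<longrightarrow>
             measure_pmf.expectation (rand_pin n \<Theta> \<mu>)
               (\<lambda>(I, \<sigma>). cut_dist n \<Omega> (cond_dist n \<Omega> \<mu> I \<sigma>) (prod_marg n (cond_dist n \<Omega> \<mu> I \<sigma>))) < \<epsilon> \<and>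
             measure_pmf.expectation (rand_subset n \<Theta>)
               (\<lambda>I. cut_dist n \<Omega> \<mu> (bar_mix n \<Omega> \<mu> I)) < \<epsilon>))))))"
proof (intro exI[of _ "10::real"] conjI allI impI, goal_cases)
  case (2 \<Omega> \<epsilon>)
  then have fin: "finite \<Omega>" and ne: "\<Omega> \<noteq> {}" and card: "2 \<le> card \<Omega>"
    and \<epsilon>: "0 < \<epsilon>" "\<epsilon> < 1/2" by auto
  define T where "T = nat \<lceil>4 / \<epsilon>^4\<rceil> + 1"
  define n0 where "n0 = T + nat \<lceil>2 / \<epsilon>^2\<rceil>"
  have T: "1 \<le> T" "4 / \<epsilon>^4 \<le> real T" unfolding T_def by linarith+
  have depth: "real T < (2 * ln (real (card \<Omega>)) / \<epsilon>) powr 10"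
    unfolding T_def by (rule pinning_depth_lt[OF \<epsilon> card])
  have theta: "0 < \<theta> \<and> real \<theta> < (2 * ln (real (card \<Omega>)) / \<epsilon>) powr 10 \<and> \<theta> \<le> n0"
    if "\<theta> \<in> set_pmf (pmf_of_set {1..T})" for \<theta>
  proof -
    have "1 \<le> \<theta>" "\<theta> \<le> T" using that T(1) by auto
    then show ?thesis using depth unfolding n0_def by simp
  qed
  have pinning: "measure_pmf.expectation (rand_pin n (pmf_of_set {1..T}) \<mu>)
        (\<lambda>(I, \<sigma>). cut_dist n \<Omega> (cond_dist n \<Omega> \<mu> I \<sigma>) (prod_marg n (cond_dist n \<Omega> \<mu> I \<sigma>))) < \<epsilon> \<and>
      measure_pmf.expectation (rand_subset n (pmf_of_set {1..T})) (\<lambda>I. cut_dist n \<Omega> \<mu> (bar_mix n \<Omega> \<mu> I)) < \<epsilon>"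
    if n: "n0 < n" and \<mu>: "set_pmf \<mu> \<subseteq> configs n \<Omega>" for n \<mu>
  proof -
    have "Suc T \<le> n" "2 / \<epsilon>^2 < real n" using n unfolding n0_def by linarith+
    then show ?thesis
      using pinning_error_lt[OF \<epsilon>(1) T(2)] expectation_cut_dist_cond_dist_le[OF fin ne \<mu> T(1)]
        expectation_cut_dist_bar_mix_le[OF fin ne \<mu> T(1)] by fastforce
  qed
  show ?case
    using theta pinning T(1) by (intro exI[of _ n0] exI[of _ "pmf_of_set {1..T}"] conjI) (auto simp: n0_def)
qed simp

end
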